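(* For a Cartesian left additive category $\mathbb{X}$, the category $\mathcal{D}[\mathbb{X}]$ of $\mathsf{D}$-sequences is a Cartesian differential category whose differential combinator is $\mathsf{D}[f_\bullet]_n=f_{n+1}$ (equivalently, the combinator $\mathsf{D}^\delta[f_\bullet]=\delta(f_\bullet)_1$ induced by the comultiplication $\delta$ equals $\mathsf{D}[f_\bullet]$). Furthermore, the induced tangent functor of $\mathcal{D}[\mathbb{X}]$, given on objects by $A\mapsto A\times A$ and on maps by $f_\bullet\mapsto\langle (i_\bullet\cdot\pi_0)\ast f_\bullet,\mathsf{D}[f_\bullet]\rangle$, coincides with $f_\bullet\mapsto\mathsf{T}(f_\bullet)$, where $\mathsf{T}(f_\bullet)_n=\langle\mathsf{P}^n(\pi_0)f_n,f_{n+1}\rangle$.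
   Context: Composition is in diagrammatic order. A left additive category: hom-sets commutative monoids with $f(g+h)=fg+fh$, $f0=0$; $h$ additive if $(f+g)h=fh+gh$, $0h=0$. A Cartesian left additive category: left additive with finite products and additive projections. A Cartesian differential category is a Cartesian left additive category with a combinator $\mathsf{D}$, $f:A\to B\mapsto\mathsf{D}[f]:A\times A\to B$, satisfying: [CD.1] $\mathsf{D}[f+g]=\mathsf{D}[f]+\mathsf{D}[g]$, $\mathsf{D}[0]=0$; [CD.2] $(1\times(\pi_0+\pi_1))\mathsf{D}[f]=(1\times\pi_0)\mathsf{D}[f]+(1\times\pi_1)\mathsf{D}[f]$, $\langle1,0\rangle\mathsf{D}[f]=0$; [CD.3] $\mathsf{D}[1]=\pi_1$, $\mathsf{D}[\pi_j]=\pi_1\pi_j$; [CD.4] $\mathsf{D}[\langle f,g\rangle]=\langle\mathsf{D}[f],\mathsf{D}[g]\rangle$; [CD.5] $\mathsf{D}[fg]=\langle\pi_0f,\mathsf{D}[f]\rangle\mathsf{D}[g]$; [CD.6] $\ell\mathsf{D}[\mathsf{D}[f]]=\mathsf{D}[f]$, $\ell=\langle1,0\rangle\times\langle0,1\rangle:A\times A\to(A\times A)\times(A\times A)$; [CD.7] $c\mathsf{D}[\mathsf{D}[f]]=\mathsf{D}[\mathsf{D}[f]]$, $c=\langle\langle\pi_0\pi_0,\pi_1\pi_0\rangle,\langle\pi_0\pi_1,\pi_1\pi_1\rangle\rangle$ (swap of the middle components of $(A\times A)\times(A\times A)$). Let $\mathsf{P}(A)=A\times A$, $\mathsf{P}(f)=f\times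 f$. A pre-$\mathsf{D}$-sequence $f_\bullet:A\to B$ is $(f_0,f_1,\dots)$ with $f_n:\mathsf{P}^n(A)\to B$. $(h\cdot f_\bullet)_n=\mathsf{P}^n(h)f_n$, $(f_\bullet\cdot k)_n=f_nk$. $\mathsf{T}(f_\bullet):\mathsf{P}(A)\to\mathsf{P}(B)$ with $\mathsf{T}(f_\bullet)_n=\langle\mathsf{P}^n(\pi_0)f_n,f_{n+1}\rangle$; $\mathsf{D}[f_\bullet]:\mathsf{P}(A)\to B$ with $\mathsf{D}[f_\bullet]_n=f_{n+1}$. Identity: $i_0=1$, $i_n=\pi_1\cdots\pi_1$ ($n$ times). Composition: $(f_\bullet\ast g_\bullet)_n=\mathsf{T}^n(f_\bullet)_0g_n$. Products in sequences: projections $i_\bullet\cdot\pi_j$, pairing $\langle f_\bullet,g_\bullet\rangle_n=\langle f_n,g_n\rangle$, terminal object of $\mathbb{X}$; sums and zero pointwise. A $\mathsf{D}$-sequence is a pre-$\mathsf{D}$-sequence with, for all $n$: $\langle1,0\rangle\cdot\mathsf{D}^{n+1}[f_\bullet]=0_\bullet$; $(1\times(\pi_0+\pi_1))\cdot\mathsf{D}^{n+1}[f_\bullet]=(1\times\pi_0)\cdot\mathsf{D}^{n+1}[f_\bullet]+(1\times\pi_1)\cdot\mathsf{D}^{n+1}[f_\bullet]$; $\ell\cdot\mathsf{D}^{n+2}[f_\bullet]=\mathsf{D}^{n+1}[f_\bullet]$; $c\cdot\mathsf{D}^{n+2}[f_\bullet]=\mathsf{D}^{n+2}[f_\bullet]$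 (maps $\langle1,0\rangle,1\times\pi_j,\ell,c$ taken for the object $\mathsf{P}^n(A)$). $\mathcal{D}[\mathbb{X}]$ is the category of $\mathsf{D}$-sequences with this structure. The comultiplication $\delta:\mathcal{D}[\mathbb{X}]\to\mathcal{D}[\mathcal{D}[\mathbb{X}]]$ sends $f_\bullet$ to the sequence with $0$-th term $f_\bullet$ and $n$-th term $\mathsf{D}^n[f_\bullet]$. *)

theory Defs
  imports Main
begin

text \<open>A category with chosen binary products, terminal object, and hom-wise
sums/zeros. c_comp f g means "first f, then g".\<close>

record ('o, 'm) cat_data =
  c_obj  :: "'o set"
  c_arr  :: "'m set"
  c_dom  :: "'m \<Rightarrow> 'o"
  c_cod  :: "'m \<Rightarrow> 'o"
  c_id   :: "'o \<Rightarrow> 'm"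
  c_comp :: "'m \<Rightarrow> 'm \<Rightarrow> 'm"
  c_plus :: "'m \<Rightarrow> 'm \<Rightarrow> 'm"
  c_zero :: "'o \<Rightarrow> 'o \<Rightarrow> 'm"
  c_prod :: "'o \<Rightarrow> 'o \<Rightarrow> 'o"
  c_p0   :: "'o \<Rightarrow> 'o \<Rightarrow> 'm"
  c_p1   :: "'o \<Rightarrow> 'o \<Rightarrow> 'm"
  c_pair :: "'m \<Rightarrow> 'm \<Rightarrow> 'm"
  c_term :: "'o"
  c_bang :: "'o \<Rightarrow> 'm"

definition hom :: "('o, 'm) cat_data \<Rightarrow> 'o \<Rightarrow> 'o \<Rightarrow> 'm set" where
  "hom X A B = {f \<in> c_arr X. c_dom X f = A \<and> c_cod X f = B}"

definition is_category :: "('o, 'm) cat_data \<Rightarrow> bool" where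
  "is_category X \<longleftrightarrow>
     (\<forall>f\<in>c_arr X. c_dom X f \<in> c_obj X \<and> c_cod X f \<in> c_obj X) \<and>
     (\<forall>A\<in>c_obj X. c_id X A \<in> hom X A A) \<and>
     (\<forall>A B D f g. f \<in> hom X A B \<longrightarrow> g \<in> hom X B D \<longrightarrow> c_comp X f g \<in> hom X A D) \<and>
     (\<forall>A B f. f \<in> hom X A B \<longrightarrow> c_comp X (c_id X A) f = f \<and> c_comp X f (c_id X B) = f) \<and>
     (\<forall>A B D E f g h. f \<in> hom X A B \<longrightarrow> g \<in> hom X B D \<longrightarrow> h \<in> hom X D E \<longrightarrow>
        c_comp X (c_comp X f g) h = c_comp X f (c_comp X g h))"

definition is_left_additive :: "('o, 'm) cat_data \<Rightarrow> bool" where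
  "is_left_additive X \<longleftrightarrow> is_category X \<and>
     (\<forall>A\<in>c_obj X. \<forall>B\<in>c_obj X. c_zero X A B \<in> hom X A B) \<and>
     (\<forall>A B f g. f \<in> hom X A B \<longrightarrow> g \<in> hom X A B \<longrightarrow> c_plus X f g \<in> hom X A B) \<and>
     (\<forall>A B f g h. f \<in> hom X A B \<longrightarrow> g \<in> hom X A B \<longrightarrow> h \<in> hom X A B \<longrightarrow>
        c_plus X (c_plus X f g) h = c_plus X f (c_plus X g h)) \<and>
     (\<forall>A B f g. f \<in> hom X A B \<longrightarrow> g \<in> hom X A B \<longrightarrow> c_plus X f g = c_plus X g f) \<and>
     (\<forall>A B f. f \<in> hom X A B \<longrightarrow> c_plus X f (c_zero X A B) = f) \<and>
     (\<forall>A B D f g h. f \<in> hom X A B \<longrightarrow> g \<in> hom X B D \<longrightarrow> h \<in> hom X B D \<longrightarrow>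
        c_comp X f (c_plus X g h) = c_plus X (c_comp X f g) (c_comp X f h)) \<and>
     (\<forall>A B D f. f \<in> hom X A B \<longrightarrow> D \<in> c_obj X \<longrightarrow> c_comp X f (c_zero X B D) = c_zero X A D)"

definition is_additive :: "('o, 'm) cat_data \<Rightarrow> 'm \<Rightarrow> bool" where
  "is_additive X h \<longleftrightarrow>
     (\<forall>A f g. f \<in> hom X A (c_dom X h) \<longrightarrow> g \<in> hom X A (c_dom X h) \<longrightarrow>
        c_comp X (c_plus X f g) h = c_plus X (c_comp X f h) (c_comp X g h)) \<and>
     (\<forall>A\<in>c_obj X. c_comp X (c_zero X A (c_dom X h)) h = c_zero X A (c_cod X h))"

definition is_cartesian_left_additive :: "('o, 'm) cat_data \<Rightarrow> bool" where
  "is_cartesian_left_additive X \<longleftrightarrow> is_left_additive X \<and>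
     c_term X \<in> c_obj X \<and>
     (\<forall>A\<in>c_obj X. c_bang X A \<in> hom X A (c_term X) \<and> (\<forall>h\<in>hom X A (c_term X). h = c_bang X A)) \<and>
     (\<forall>A\<in>c_obj X. \<forall>B\<in>c_obj X. c_prod X A B \<in> c_obj X \<and>
        c_p0 X A B \<in> hom X (c_prod X A B) A \<and> c_p1 X A B \<in> hom X (c_prod X A B) B \<and>
        is_additive X (c_p0 X A B) \<and> is_additive X (c_p1 X A B)) \<and>
     (\<forall>A B D f g. A \<in> c_obj X \<longrightarrow> B \<in> c_obj X \<longrightarrow> f \<in> hom X D A \<longrightarrow> g \<in> hom X D B \<longrightarrow>
        c_pair X f g \<in> hom X D (c_prod X A B) \<and>
        c_comp X (c_pair X f g) (c_p0 X A B) = f \<and> c_comp X (c_pair X f g) (c_p1 X A B) = g) \<and>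
     (\<forall>A B D h. A \<in> c_obj X \<longrightarrow> B \<in> c_obj X \<longrightarrow> h \<in> hom X D (c_prod X A B) \<longrightarrow>
        c_pair X (c_comp X h (c_p0 X A B)) (c_comp X h (c_p1 X A B)) = h)"

definition cross :: "('o, 'm) cat_data \<Rightarrow> 'm \<Rightarrow> 'm \<Rightarrow> 'm" where
  "cross X f g = c_pair X (c_comp X (c_p0 X (c_dom X f) (c_dom X g)) f)
                          (c_comp X (c_p1 X (c_dom X f) (c_dom X g)) g)"

definition ell :: "('o, 'm) cat_data \<Rightarrow> 'o \<Rightarrow> 'm" where
  "ell X A = cross X (c_pair X (c_id X A) (c_zero X A A)) (c_pair X (c_zero X A A) (c_id X A))"

definition cmid :: "('o, 'm) cat_data \<Rightarrow> 'o \<Rightarrow> 'm" where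
  "cmid X A = (let AA = c_prod X A A; q = c_p0 X AA AA; r = c_p1 X AA AA in
     c_pair X (c_pair X (c_comp X q (c_p0 X A A)) (c_comp X r (c_p0 X A A)))
              (c_pair X (c_comp X q (c_p1 X A A)) (c_comp X r (c_p1 X A A))))"

definition is_cartesian_differential :: "('o, 'm) cat_data \<Rightarrow> ('m \<Rightarrow> 'm) \<Rightarrow> bool" where
  "is_cartesian_differential X D \<longleftrightarrow> is_cartesian_left_additive X \<and>
     (\<forall>A B f. f \<in> hom X A B \<longrightarrow> D f \<in> hom X (c_prod X A A) B) \<and>
     \<comment> \<open>CD.1\<close>
     (\<forall>A B f g. f \<in> hom X A B \<longrightarrow> g \<in> hom X A B \<longrightarrow> D (c_plus X f g) = c_plus X (D f) (D g)) \<and>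
     (\<forall>A\<in>c_obj X. \<forall>B\<in>c_obj X. D (c_zero X A B) = c_zero X (c_prod X A A) B) \<and>
     \<comment> \<open>CD.2\<close>
     (\<forall>A B f. f \<in> hom X A B \<longrightarrow>
        c_comp X (cross X (c_id X A) (c_plus X (c_p0 X A A) (c_p1 X A A))) (D f) =
        c_plus X (c_comp X (cross X (c_id X A) (c_p0 X A A)) (D f))
                 (c_comp X (cross X (c_id X A) (c_p1 X A A)) (D f))) \<and>
     (\<forall>A B f. f \<in> hom X A B \<longrightarrow> c_comp X (c_pair X (c_id X A) (c_zero X A A)) (D f) = c_zero X A B) \<and>
     \<comment> \<open>CD.3\<close>
     (\<forall>A\<in>c_obj X. D (c_id X A) = c_p1 X A A) \<and>
     (\<forall>A\<in>c_obj X. \<forall>B\<in>c_obj X.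
        D (c_p0 X A B) = c_comp X (c_p1 X (c_prod X A B) (c_prod X A B)) (c_p0 X A B) \<and>
        D (c_p1 X A B) = c_comp X (c_p1 X (c_prod X A B) (c_prod X A B)) (c_p1 X A B)) \<and>
     \<comment> \<open>CD.4\<close>
     (\<forall>A B E f g. f \<in> hom X A B \<longrightarrow> g \<in> hom X A E \<longrightarrow> D (c_pair X f g) = c_pair X (D f) (D g)) \<and>
     \<comment> \<open>CD.5\<close>
     (\<forall>A B E f g. f \<in> hom X A B \<longrightarrow> g \<in> hom X B E \<longrightarrow>
        D (c_comp X f g) = c_comp X (c_pair X (c_comp X (c_p0 X A A) f) (D f)) (D g)) \<and>
     \<comment> \<open>CD.6\<close>
     (\<forall>A B f. f \<in> hom X A B \<longrightarrow> c_comp X (ell X A) (D (D f)) = D f) \<and>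
     \<comment> \<open>CD.7\<close>
     (\<forall>A B f. f \<in> hom X A B \<longrightarrow> c_comp X (cmid X A) (D (D f)) = D (D f))"

definition Pn :: "('o, 'm) cat_data \<Rightarrow> nat \<Rightarrow> 'o \<Rightarrow> 'o" where
  "Pn X n A = ((\<lambda>C. c_prod X C C) ^^ n) A"

definition Pmap :: "('o, 'm) cat_data \<Rightarrow> nat \<Rightarrow> 'm \<Rightarrow> 'm" where
  "Pmap X n h = ((\<lambda>k. cross X k k) ^^ n) h"

primrec idseq :: "('o, 'm) cat_data \<Rightarrow> 'o \<Rightarrow> nat \<Rightarrow> 'm" where
  "idseq X A 0 = c_id X A"
| "idseq X A (Suc n) = c_comp X (c_p1 X (Pn X n A) (Pn X n A)) (idseq X A n)"

definition seq_pre :: "('o, 'm) cat_data \<Rightarrow> 'm \<Rightarrow> (nat \<Rightarrow> 'm) \<Rightarrow> nat \<Rightarrow> 'm" where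
  "seq_pre X h f = (\<lambda>n. c_comp X (Pmap X n h) (f n))"

definition seq_post :: "('o, 'm) cat_data \<Rightarrow> (nat \<Rightarrow> 'm) \<Rightarrow> 'm \<Rightarrow> nat \<Rightarrow> 'm" where
  "seq_post X f k = (\<lambda>n. c_comp X (f n) k)"

definition Dop :: "(nat \<Rightarrow> 'm) \<Rightarrow> nat \<Rightarrow> 'm" where
  "Dop f = (\<lambda>n. f (Suc n))"

definition Tseq :: "('o, 'm) cat_data \<Rightarrow> (nat \<Rightarrow> 'm) \<Rightarrow> nat \<Rightarrow> 'm" where
  "Tseq X f = (let A = c_dom X (f 0) in
     (\<lambda>n. c_pair X (c_comp X (Pmap X n (c_p0 X A A)) (f n)) (f (Suc n))))"

definition seq_comp :: "('o, 'm) cat_data \<Rightarrow> (nat \<Rightarrow> 'm) \<Rightarrow> (nat \<Rightarrow> 'm) \<Rightarrow> nat \<Rightarrow> 'm" where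
  "seq_comp X f g = (\<lambda>n. c_comp X ((Tseq X ^^ n) f 0) (g n))"

definition seq_zero :: "('o, 'm) cat_data \<Rightarrow> 'o \<Rightarrow> 'o \<Rightarrow> nat \<Rightarrow> 'm" where
  "seq_zero X A B = (\<lambda>n. c_zero X (Pn X n A) B)"

definition seq_plus :: "('o, 'm) cat_data \<Rightarrow> (nat \<Rightarrow> 'm) \<Rightarrow> (nat \<Rightarrow> 'm) \<Rightarrow> nat \<Rightarrow> 'm" where
  "seq_plus X f g = (\<lambda>n. c_plus X (f n) (g n))"

definition is_pre_Dseq :: "('o, 'm) cat_data \<Rightarrow> 'o \<Rightarrow> 'o \<Rightarrow> (nat \<Rightarrow> 'm) \<Rightarrow> bool" where
  "is_pre_Dseq X A B f \<longleftrightarrow> A \<in> c_obj X \<and> B \<in> c_obj X \<and> (\<forall>n. f n \<in> hom X (Pn X n A) B)"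

definition is_Dseq :: "('o, 'm) cat_data \<Rightarrow> 'o \<Rightarrow> 'o \<Rightarrow> (nat \<Rightarrow> 'm) \<Rightarrow> bool" where
  "is_Dseq X A B f \<longleftrightarrow> is_pre_Dseq X A B f \<and>
     (\<forall>n. let C = Pn X n A; g1 = (Dop ^^ Suc n) f; g2 = (Dop ^^ Suc (Suc n)) f in
        seq_pre X (c_pair X (c_id X C) (c_zero X C C)) g1 = seq_zero X C B \<and>
        seq_pre X (cross X (c_id X C) (c_plus X (c_p0 X C C) (c_p1 X C C))) g1 =
          seq_plus X (seq_pre X (cross X (c_id X C) (c_p0 X C C)) g1)
                     (seq_pre X (cross X (c_id X C) (c_p1 X C C)) g1) \<and>
        seq_pre X (ell X C) g2 = g1 \<and>
        seq_pre X (cmid X C) g2 = g2)"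

definition Dseq_cat :: "('o, 'm) cat_data \<Rightarrow> ('o, nat \<Rightarrow> 'm) cat_data" where
  "Dseq_cat X = \<lparr>
     c_obj = c_obj X,
     c_arr = {f. \<exists>A B. is_Dseq X A B f},
     c_dom = (\<lambda>f. c_dom X (f 0)),
     c_cod = (\<lambda>f. c_cod X (f 0)),
     c_id = idseq X,
     c_comp = seq_comp X,
     c_plus = seq_plus X,
     c_zero = seq_zero X,
     c_prod = c_prod X,
     c_p0 = (\<lambda>A B. seq_post X (idseq X (c_prod X A B)) (c_p0 X A B)),
     c_p1 = (\<lambda>A B. seq_post X (idseq X (c_prod X A B)) (c_p1 X A B)),
     c_pair = (\<lambda>f g n. c_pair X (f n) (g n)),
     c_term = c_term X,
     c_bang = (\<lambda>A n. c_bang X (Pn X n A)) \<rparr>"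

definition delta :: "(nat \<Rightarrow> 'm) \<Rightarrow> nat \<Rightarrow> nat \<Rightarrow> 'm" where
  "delta f = (\<lambda>n. (Dop ^^ n) f)"

end

theory Submission
  imports Defs
begin

(* Composition of pre-D-sequences, (f * g)_n = (T^n f)_0 g_n, is associative and unital because
   the maps P^n(h) of X commute with (T^n -)_0; this makes T a functor, and a map h of X acts on
   sequences by precomposition, h . f. The chain rule D[f * g] = T f * D g then holds by the very
   definition of *, and T f = <pi0 * f, D f>, which gives CD.5 and identifies the tangent functor;
   CD.2, CD.6 and CD.7 for D[X] are the D-sequence axioms at level 0. The real work is closure:
   T f and f * g are again D-sequences. Every derivative of T f has the shape
   k |-> <P^k(y) U_k, V_k> with y = P^m(pi0) additive, and the structure maps <1,0>, 1 x (pi0 + pi1),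
   l and c commute with such y, so the axioms for T f reduce to those for the derivatives of f. *)

section \<open>Cartesian left additive categories\<close>

locale cartesian_left_additive_cat =
  fixes X :: "('o, 'm) cat_data"
  assumes cartesian_left_additive: "is_cartesian_left_additive X"
begin

abbreviation Ob :: "'o set" where "Ob \<equiv> c_obj X"
abbreviation arr :: "'m \<Rightarrow> bool" where "arr f \<equiv> f \<in> c_arr X"
abbreviation src :: "'m \<Rightarrow> 'o" where "src \<equiv> c_dom X"
abbreviation tgt :: "'m \<Rightarrow> 'o" where "tgt \<equiv> c_cod X"
abbreviation id_arr ("\<one>") where "\<one> \<equiv> c_id X"
abbreviation arr_comp (infixl "\<bullet>" 70) where "f \<bullet> g \<equiv> c_comp X f g"
abbreviation arr_plus (infixl "\<oplus>" 65) where "f \<oplus> g \<equiv> c_plus X f g"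
abbreviation zero_arr ("\<zero>") where "\<zero> \<equiv> c_zero X"
abbreviation obj_prod (infix "\<otimes>" 80) where "A \<otimes> B \<equiv> c_prod X A B"
abbreviation \<pi>\<^sub>0 where "\<pi>\<^sub>0 \<equiv> c_p0 X"
abbreviation \<pi>\<^sub>1 where "\<pi>\<^sub>1 \<equiv> c_p1 X"
abbreviation pairing ("\<langle>_,/ _\<rangle>") where "\<langle>f, g\<rangle> \<equiv> c_pair X f g"
abbreviation arr_cross (infix "\<times>\<^sub>a" 80) where "f \<times>\<^sub>a g \<equiv> cross X f g"

lemma left_additive: "is_left_additive X"
  using cartesian_left_additive by (simp add: is_cartesian_left_additive_def)

lemma category: "is_category X"
  using left_additive by (simp add: is_left_additive_def)

lemma hom_iff: "f \<in> hom X A B \<longleftrightarrow> arr f \<and> src f = A \<and> tgt f = B"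
  by (simp add: hom_def)

lemma src_obj[simp]: "arr f \<Longrightarrow> src f \<in> Ob"
  and tgt_obj[simp]: "arr f \<Longrightarrow> tgt f \<in> Ob"
  using category by (auto simp: is_category_def)

lemma id_typing[simp]:
  "A \<in> Ob \<Longrightarrow> arr (\<one> A)" "A \<in> Ob \<Longrightarrow> src (\<one> A) = A" "A \<in> Ob \<Longrightarrow> tgt (\<one> A) = A"
  using category by (auto simp: is_category_def hom_def)

lemma comp_typing[simp]:
  "arr f \<Longrightarrow> arr g \<Longrightarrow> tgt f = src g \<Longrightarrow> arr (f \<bullet> g)"
  "arr f \<Longrightarrow> arr g \<Longrightarrow> tgt f = src g \<Longrightarrow> src (f \<bullet> g) = src f"
  "arr f \<Longrightarrow> arr g \<Longrightarrow> tgt f = src g \<Longrightarrow> tgt (f \<bullet> g) = tgt g"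
  using category[unfolded is_category_def hom_def mem_Collect_eq] by blast+

lemma id_comp[simp]: "arr f \<Longrightarrow> A = src f \<Longrightarrow> \<one> A \<bullet> f = f"
  and comp_id[simp]: "arr f \<Longrightarrow> B = tgt f \<Longrightarrow> f \<bullet> \<one> B = f"
  using category[unfolded is_category_def hom_def mem_Collect_eq] by blast+

text \<open>Composites are normalised to the right; the primed variants of rules below are the forms
  that still match after this normalisation.\<close>

lemma comp_assoc[simp]:
  "arr f \<Longrightarrow> arr g \<Longrightarrow> arr h \<Longrightarrow> tgt f = src g \<Longrightarrow> tgt g = src h \<Longrightarrow> (f \<bullet> g) \<bullet> h = f \<bullet> (g \<bullet> h)"
  using category[unfolded is_category_def hom_def mem_Collect_eq] by blast

lemma zero_typing[simp]:
  "A \<in> Ob \<Longrightarrow> B \<in> Ob \<Longrightarrow> arr (\<zero> A B)" "A \<in> Ob \<Longrightarrow> B \<in> Ob \<Longrightarrow> src (\<zero> A B) = A"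
  "A \<in> Ob \<Longrightarrow> B \<in> Ob \<Longrightarrow> tgt (\<zero> A B) = B"
  using left_additive by (auto simp: is_left_additive_def hom_def)

lemma plus_typing[simp]:
  "arr f \<Longrightarrow> arr g \<Longrightarrow> src f = src g \<Longrightarrow> tgt f = tgt g \<Longrightarrow> arr (f \<oplus> g)"
  "arr f \<Longrightarrow> arr g \<Longrightarrow> src f = src g \<Longrightarrow> tgt f = tgt g \<Longrightarrow> src (f \<oplus> g) = src f"
  "arr f \<Longrightarrow> arr g \<Longrightarrow> src f = src g \<Longrightarrow> tgt f = tgt g \<Longrightarrow> tgt (f \<oplus> g) = tgt f"
  using left_additive by (auto simp: is_left_additive_def hom_def)

lemma plus_assoc:
  "arr f \<Longrightarrow> arr g \<Longrightarrow> arr h \<Longrightarrow> src g = src f \<Longrightarrow> src h = src f \<Longrightarrow> tgt g = tgt f \<Longrightarrow> tgt h = tgt f \<Longrightarrow>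
   (f \<oplus> g) \<oplus> h = f \<oplus> (g \<oplus> h)"
  using left_additive by (auto simp: is_left_additive_def hom_def)

lemma plus_commute:
  "arr f \<Longrightarrow> arr g \<Longrightarrow> src g = src f \<Longrightarrow> tgt g = tgt f \<Longrightarrow> f \<oplus> g = g \<oplus> f"
  using left_additive[unfolded is_left_additive_def hom_def mem_Collect_eq] by blast

lemma plus_zero[simp]: "arr f \<Longrightarrow> A = src f \<Longrightarrow> B = tgt f \<Longrightarrow> f \<oplus> \<zero> A B = f"
  using left_additive[unfolded is_left_additive_def hom_def mem_Collect_eq] by blast

lemma plus_interchange:
  assumes "arr a" "arr b" "arr c" "arr d"
    and "src b = src a" "src c = src a" "src d = src a" "tgt b = tgt a" "tgt c = tgt a" "tgt d = tgt a"
  shows "(a \<oplus> b) \<oplus> (c \<oplus> d) = (a \<oplus> c) \<oplus> (b \<oplus> d)"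
  using assms by (simp add: plus_assoc plus_commute[of b c] flip: plus_assoc[of b c d])

lemma comp_plus[simp]:
  "arr f \<Longrightarrow> arr g \<Longrightarrow> arr h \<Longrightarrow> tgt f = src g \<Longrightarrow> src g = src h \<Longrightarrow> tgt g = tgt h \<Longrightarrow>
   f \<bullet> (g \<oplus> h) = f \<bullet> g \<oplus> f \<bullet> h"
  using left_additive by (auto simp: is_left_additive_def hom_def)

lemma comp_zero[simp]: "arr f \<Longrightarrow> B = tgt f \<Longrightarrow> C \<in> Ob \<Longrightarrow> f \<bullet> \<zero> B C = \<zero> (src f) C"
  using left_additive[unfolded is_left_additive_def hom_def mem_Collect_eq] by blast


lemma cartesian_hom_axioms:
  shows terminal_obj[simp]: "c_term X \<in> Ob"
    and bang_hom: "A \<in> Ob \<Longrightarrow> c_bang X A \<in> hom X A (c_term X)"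
    and bang_hom_unique: "A \<in> Ob \<Longrightarrow> h \<in> hom X A (c_term X) \<Longrightarrow> h = c_bang X A"
    and prod_obj[simp]: "A \<in> Ob \<Longrightarrow> B \<in> Ob \<Longrightarrow> A \<otimes> B \<in> Ob"
    and proj0_hom: "A \<in> Ob \<Longrightarrow> B \<in> Ob \<Longrightarrow> \<pi>\<^sub>0 A B \<in> hom X (A \<otimes> B) A"
    and proj1_hom: "A \<in> Ob \<Longrightarrow> B \<in> Ob \<Longrightarrow> \<pi>\<^sub>1 A B \<in> hom X (A \<otimes> B) B"
    and proj_additive[simp]: "A \<in> Ob \<Longrightarrow> B \<in> Ob \<Longrightarrow> is_additive X (\<pi>\<^sub>0 A B)"
      "A \<in> Ob \<Longrightarrow> B \<in> Ob \<Longrightarrow> is_additive X (\<pi>\<^sub>1 A B)"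
    and pair_universal: "A \<in> Ob \<Longrightarrow> B \<in> Ob \<Longrightarrow> f \<in> hom X D A \<Longrightarrow> g \<in> hom X D B \<Longrightarrow>
      \<langle>f, g\<rangle> \<in> hom X D (A \<otimes> B) \<and> \<langle>f, g\<rangle> \<bullet> \<pi>\<^sub>0 A B = f \<and> \<langle>f, g\<rangle> \<bullet> \<pi>\<^sub>1 A B = g"
    and pair_hom_eta: "A \<in> Ob \<Longrightarrow> B \<in> Ob \<Longrightarrow> h \<in> hom X D (A \<otimes> B) \<Longrightarrow>
      \<langle>h \<bullet> \<pi>\<^sub>0 A B, h \<bullet> \<pi>\<^sub>1 A B\<rangle> = h"
  using cartesian_left_additive by (simp_all add: is_cartesian_left_additive_def)

lemma bang_typing[simp]:
  "A \<in> Ob \<Longrightarrow> arr (c_bang X A)" "A \<in> Ob \<Longrightarrow> src (c_bang X A) = A"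
  "A \<in> Ob \<Longrightarrow> tgt (c_bang X A) = c_term X"
  using bang_hom by (simp_all add: hom_iff)

lemma bang_unique: "arr h \<Longrightarrow> tgt h = c_term X \<Longrightarrow> h = c_bang X (src h)"
  by (simp add: bang_hom_unique hom_iff)

lemma proj_typing[simp]:
  "A \<in> Ob \<Longrightarrow> B \<in> Ob \<Longrightarrow> arr (\<pi>\<^sub>0 A B)" "A \<in> Ob \<Longrightarrow> B \<in> Ob \<Longrightarrow> src (\<pi>\<^sub>0 A B) = A \<otimes> B"
  "A \<in> Ob \<Longrightarrow> B \<in> Ob \<Longrightarrow> tgt (\<pi>\<^sub>0 A B) = A"
  "A \<in> Ob \<Longrightarrow> B \<in> Ob \<Longrightarrow> arr (\<pi>\<^sub>1 A B)" "A \<in> Ob \<Longrightarrow> B \<in> Ob \<Longrightarrow> src (\<pi>\<^sub>1 A B) = A \<otimes> B"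
  "A \<in> Ob \<Longrightarrow> B \<in> Ob \<Longrightarrow> tgt (\<pi>\<^sub>1 A B) = B"
  using proj0_hom proj1_hom by (simp_all add: hom_iff)

lemma pair_typing[simp]:
  "arr f \<Longrightarrow> arr g \<Longrightarrow> src f = src g \<Longrightarrow> arr \<langle>f, g\<rangle>"
  "arr f \<Longrightarrow> arr g \<Longrightarrow> src f = src g \<Longrightarrow> src \<langle>f, g\<rangle> = src f"
  "arr f \<Longrightarrow> arr g \<Longrightarrow> src f = src g \<Longrightarrow> tgt \<langle>f, g\<rangle> = tgt f \<otimes> tgt g"
  using pair_universal[of "tgt f" "tgt g" f "src f" g] by (simp_all add: hom_iff)

lemma pair_proj0[simp]: "arr f \<Longrightarrow> arr g \<Longrightarrow> src f = src g \<Longrightarrow> A = tgt f \<Longrightarrow> B = tgt g \<Longrightarrow>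
    \<langle>f, g\<rangle> \<bullet> \<pi>\<^sub>0 A B = f"
  and pair_proj1[simp]: "arr f \<Longrightarrow> arr g \<Longrightarrow> src f = src g \<Longrightarrow> A = tgt f \<Longrightarrow> B = tgt g \<Longrightarrow>
    \<langle>f, g\<rangle> \<bullet> \<pi>\<^sub>1 A B = g"
  using pair_universal[of "tgt f" "tgt g" f "src f" g] by (simp_all add: hom_iff)

lemma pair_eta: "A \<in> Ob \<Longrightarrow> B \<in> Ob \<Longrightarrow> arr h \<Longrightarrow> tgt h = A \<otimes> B \<Longrightarrow> \<langle>h \<bullet> \<pi>\<^sub>0 A B, h \<bullet> \<pi>\<^sub>1 A B\<rangle> = h"
  using pair_hom_eta[of A B h "src h"] by (simp add: hom_iff)

lemma pair_proj0'[simp]: "arr f \<Longrightarrow> arr g \<Longrightarrow> src f = src g \<Longrightarrow> A = tgt f \<Longrightarrow> B = tgt g \<Longrightarrow>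
    arr h \<Longrightarrow> src h = A \<Longrightarrow> \<langle>f, g\<rangle> \<bullet> (\<pi>\<^sub>0 A B \<bullet> h) = f \<bullet> h"
  by (subst comp_assoc[symmetric]) simp_all

lemma pair_proj1'[simp]: "arr f \<Longrightarrow> arr g \<Longrightarrow> src f = src g \<Longrightarrow> A = tgt f \<Longrightarrow> B = tgt g \<Longrightarrow>
    arr h \<Longrightarrow> src h = B \<Longrightarrow> \<langle>f, g\<rangle> \<bullet> (\<pi>\<^sub>1 A B \<bullet> h) = g \<bullet> h"
  by (subst comp_assoc[symmetric]) simp_all

lemma prod_arr_eqI:
  assumes "A \<in> Ob" "B \<in> Ob" "arr h" "arr k" "tgt h = A \<otimes> B" "tgt k = A \<otimes> B"
    and "h \<bullet> \<pi>\<^sub>0 A B = k \<bullet> \<pi>\<^sub>0 A B" "h \<bullet> \<pi>\<^sub>1 A B = k \<bullet> \<pi>\<^sub>1 A B"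
  shows "h = k"
proof -
  have "h = \<langle>h \<bullet> \<pi>\<^sub>0 A B, h \<bullet> \<pi>\<^sub>1 A B\<rangle>"
    by (rule pair_eta[symmetric]) (use assms in simp_all)
  also have "\<dots> = \<langle>k \<bullet> \<pi>\<^sub>0 A B, k \<bullet> \<pi>\<^sub>1 A B\<rangle>"
    by (simp only: assms(7,8))
  also have "\<dots> = k"
    by (rule pair_eta) (use assms in simp_all)
  finally show ?thesis .
qed

lemma additive_plus[simp]:
  assumes "is_additive X h" "arr f" "arr g" "src f = src g" "tgt f = src h" "tgt g = src h"
  shows "(f \<oplus> g) \<bullet> h = f \<bullet> h \<oplus> g \<bullet> h"
proof -
  have "f \<in> hom X (src f) (src h)" "g \<in> hom X (src f) (src h)"
    using assms by (simp_all add: hom_def)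
  then show ?thesis
    using assms(1) unfolding is_additive_def by blast
qed

lemma additive_zero[simp]:
  assumes "is_additive X h" "D \<in> Ob" "A = src h"
  shows "\<zero> D A \<bullet> h = \<zero> D (tgt h)"
  using assms unfolding is_additive_def by blast

lemma additiveI:
  assumes "\<And>f g. arr f \<Longrightarrow> arr g \<Longrightarrow> src f = src g \<Longrightarrow> tgt f = src h \<Longrightarrow> tgt g = src h \<Longrightarrow>
      (f \<oplus> g) \<bullet> h = f \<bullet> h \<oplus> g \<bullet> h"
    and "\<And>D. D \<in> Ob \<Longrightarrow> \<zero> D (src h) \<bullet> h = \<zero> D (tgt h)"
  shows "is_additive X h"
  unfolding is_additive_def
proof (intro conjI allI impI ballI)
  fix A f g
  assume "f \<in> hom X A (src h)" "g \<in> hom X A (src h)"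
  then show "(f \<oplus> g) \<bullet> h = f \<bullet> h \<oplus> g \<bullet> h"
    by (intro assms(1)) (simp_all add: hom_def)
qed (rule assms(2))

lemma comp_pair[simp]:
  "arr h \<Longrightarrow> arr f \<Longrightarrow> arr g \<Longrightarrow> src f = src g \<Longrightarrow> tgt h = src f \<Longrightarrow> h \<bullet> \<langle>f, g\<rangle> = \<langle>h \<bullet> f, h \<bullet> g\<rangle>"
  by (rule prod_arr_eqI[of "tgt f" "tgt g"]) auto

lemma pair_plus:
  "arr a \<Longrightarrow> arr b \<Longrightarrow> arr c \<Longrightarrow> arr d \<Longrightarrow> src b = src a \<Longrightarrow> src c = src a \<Longrightarrow> src d = src a \<Longrightarrow>
   tgt c = tgt a \<Longrightarrow> tgt d = tgt b \<Longrightarrow> \<langle>a, b\<rangle> \<oplus> \<langle>c, d\<rangle> = \<langle>a \<oplus> c, b \<oplus> d\<rangle>"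
  by (rule prod_arr_eqI[of "tgt a" "tgt b"]) auto

lemma pair_zero: "D \<in> Ob \<Longrightarrow> A \<in> Ob \<Longrightarrow> B \<in> Ob \<Longrightarrow> \<langle>\<zero> D A, \<zero> D B\<rangle> = \<zero> D (A \<otimes> B)"
  by (rule prod_arr_eqI[of A B]) auto

lemma additive_id[simp]: "A \<in> Ob \<Longrightarrow> is_additive X (\<one> A)"
  by (rule additiveI) simp_all

lemma additive_zero_arr[simp]: "A \<in> Ob \<Longrightarrow> B \<in> Ob \<Longrightarrow> is_additive X (\<zero> A B)"
  by (rule additiveI) simp_all

lemma additive_comp[simp]:
  assumes "is_additive X h" "is_additive X k" "arr h" "arr k" "tgt h = src k"
  shows "is_additive X (h \<bullet> k)"
  by (rule additiveI) (use assms in \<open>simp_all flip: comp_assoc\<close>)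

lemma additive_pair[simp]:
  assumes "is_additive X f" "is_additive X g" "arr f" "arr g" "src f = src g"
  shows "is_additive X \<langle>f, g\<rangle>"
  by (rule additiveI) (use assms in \<open>simp_all add: pair_plus pair_zero\<close>)

lemma terminal_arr_eqI:
  "arr h \<Longrightarrow> arr k \<Longrightarrow> src h = src k \<Longrightarrow> tgt h = c_term X \<Longrightarrow> tgt k = c_term X \<Longrightarrow> h = k"
  by (metis bang_unique)

lemma additive_bang[simp]: "A \<in> Ob \<Longrightarrow> is_additive X (c_bang X A)"
  by (rule additiveI; rule terminal_arr_eqI) simp_all

lemma cross_typing[simp]:
  "arr f \<Longrightarrow> arr g \<Longrightarrow> arr (f \<times>\<^sub>a g)"
  "arr f \<Longrightarrow> arr g \<Longrightarrow> src (f \<times>\<^sub>a g) = src f \<otimes> src g"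
  "arr f \<Longrightarrow> arr g \<Longrightarrow> tgt (f \<times>\<^sub>a g) = tgt f \<otimes> tgt g"
  unfolding cross_def by simp_all

lemma cross_proj0[simp]:
  "arr f \<Longrightarrow> arr g \<Longrightarrow> A = tgt f \<Longrightarrow> B = tgt g \<Longrightarrow> (f \<times>\<^sub>a g) \<bullet> \<pi>\<^sub>0 A B = \<pi>\<^sub>0 (src f) (src g) \<bullet> f"
  and cross_proj1[simp]:
  "arr f \<Longrightarrow> arr g \<Longrightarrow> A = tgt f \<Longrightarrow> B = tgt g \<Longrightarrow> (f \<times>\<^sub>a g) \<bullet> \<pi>\<^sub>1 A B = \<pi>\<^sub>1 (src f) (src g) \<bullet> g"
  unfolding cross_def by simp_all

lemma cross_proj0'[simp]:
  "arr f \<Longrightarrow> arr g \<Longrightarrow> A = tgt f \<Longrightarrow> B = tgt g \<Longrightarrow> arr h \<Longrightarrow> src h = A \<Longrightarrow>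
   (f \<times>\<^sub>a g) \<bullet> (\<pi>\<^sub>0 A B \<bullet> h) = \<pi>\<^sub>0 (src f) (src g) \<bullet> (f \<bullet> h)"
  by (subst comp_assoc[symmetric]) simp_all

lemma cross_proj1'[simp]:
  "arr f \<Longrightarrow> arr g \<Longrightarrow> A = tgt f \<Longrightarrow> B = tgt g \<Longrightarrow> arr h \<Longrightarrow> src h = B \<Longrightarrow>
   (f \<times>\<^sub>a g) \<bullet> (\<pi>\<^sub>1 A B \<bullet> h) = \<pi>\<^sub>1 (src f) (src g) \<bullet> (g \<bullet> h)"
  by (subst comp_assoc[symmetric]) simp_all

lemma pair_cross[simp]:
  "arr a \<Longrightarrow> arr b \<Longrightarrow> src a = src b \<Longrightarrow> arr f \<Longrightarrow> arr g \<Longrightarrow> tgt a = src f \<Longrightarrow> tgt b = src g \<Longrightarrow>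
   \<langle>a, b\<rangle> \<bullet> (f \<times>\<^sub>a g) = \<langle>a \<bullet> f, b \<bullet> g\<rangle>"
  unfolding cross_def by simp

lemma pair_cross'[simp]:
  "arr a \<Longrightarrow> arr b \<Longrightarrow> src a = src b \<Longrightarrow> arr f \<Longrightarrow> arr g \<Longrightarrow> tgt a = src f \<Longrightarrow> tgt b = src g \<Longrightarrow>
   arr h \<Longrightarrow> src h = tgt f \<otimes> tgt g \<Longrightarrow> \<langle>a, b\<rangle> \<bullet> ((f \<times>\<^sub>a g) \<bullet> h) = \<langle>a \<bullet> f, b \<bullet> g\<rangle> \<bullet> h"
  by (subst comp_assoc[symmetric]) simp_all

lemma cross_cross[simp]:
  "arr f \<Longrightarrow> arr g \<Longrightarrow> arr f' \<Longrightarrow> arr g' \<Longrightarrow> tgt f = src f' \<Longrightarrow> tgt g = src g' \<Longrightarrow>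
   (f \<times>\<^sub>a g) \<bullet> (f' \<times>\<^sub>a g') = (f \<bullet> f') \<times>\<^sub>a (g \<bullet> g')"
  unfolding cross_def by simp

lemma cross_cross'[simp]:
  "arr f \<Longrightarrow> arr g \<Longrightarrow> arr f' \<Longrightarrow> arr g' \<Longrightarrow> tgt f = src f' \<Longrightarrow> tgt g = src g' \<Longrightarrow>
   arr h \<Longrightarrow> src h = tgt f' \<otimes> tgt g' \<Longrightarrow> (f \<times>\<^sub>a g) \<bullet> ((f' \<times>\<^sub>a g') \<bullet> h) = ((f \<bullet> f') \<times>\<^sub>a (g \<bullet> g')) \<bullet> h"
  by (subst comp_assoc[symmetric]) simp_all

lemma cross_id[simp]: "A \<in> Ob \<Longrightarrow> B \<in> Ob \<Longrightarrow> \<one> A \<times>\<^sub>a \<one> B = \<one> (A \<otimes> B)"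
  unfolding cross_def by (rule prod_arr_eqI[of A B]) simp_all

lemma additive_cross[simp]:
  "is_additive X f \<Longrightarrow> is_additive X g \<Longrightarrow> arr f \<Longrightarrow> arr g \<Longrightarrow> is_additive X (f \<times>\<^sub>a g)"
  unfolding cross_def by simp

lemma Pn_0[simp]: "Pn X 0 A = A"
  and Pn_Suc[simp]: "Pn X (Suc n) A = Pn X n A \<otimes> Pn X n A"
  by (simp_all add: Pn_def)

lemma Pn_obj[simp]: "A \<in> Ob \<Longrightarrow> Pn X n A \<in> Ob"
  by (induction n) auto

lemma Pn_prod[simp]: "Pn X n (A \<otimes> A) = Pn X n A \<otimes> Pn X n A"
  by (induction n) simp_all

lemma Pn_Pn[simp]: "Pn X k (Pn X n A) = Pn X (k + n) A"
  by (simp add: Pn_def funpow_add)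

lemma Pmap_0[simp]: "Pmap X 0 h = h"
  by (simp add: Pmap_def)

lemma Pmap_Suc: "Pmap X (Suc n) h = Pmap X n h \<times>\<^sub>a Pmap X n h"
  by (simp add: Pmap_def)

lemma Pmap_Suc': "Pmap X (Suc n) h = Pmap X n (h \<times>\<^sub>a h)"
  by (induction n) (simp_all add: Pmap_Suc)

lemma Pmap_typing[simp]:
  "arr h \<Longrightarrow> arr (Pmap X n h)"
  "arr h \<Longrightarrow> src (Pmap X n h) = Pn X n (src h)"
  "arr h \<Longrightarrow> tgt (Pmap X n h) = Pn X n (tgt h)"
  by (induction n) (simp_all add: Pmap_Suc)

lemma Pmap_comp[simp]: "arr f \<Longrightarrow> arr g \<Longrightarrow> tgt f = src g \<Longrightarrow> Pmap X n f \<bullet> Pmap X n g = Pmap X n (f \<bullet> g)"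
  by (induction n) (simp_all add: Pmap_Suc)

lemma Pmap_comp'[simp]:
  "arr f \<Longrightarrow> arr g \<Longrightarrow> tgt f = src g \<Longrightarrow> arr h \<Longrightarrow> src h = Pn X n (tgt g) \<Longrightarrow>
   Pmap X n f \<bullet> (Pmap X n g \<bullet> h) = Pmap X n (f \<bullet> g) \<bullet> h"
  by (subst comp_assoc[symmetric]) simp_all

lemma Pmap_id[simp]: "A \<in> Ob \<Longrightarrow> Pmap X n (\<one> A) = \<one> (Pn X n A)"
  by (induction n) (simp_all add: Pmap_Suc)

lemma Pmap_Pmap[simp]: "Pmap X k (Pmap X n h) = Pmap X (k + n) h"
  by (simp add: Pmap_def funpow_add)

lemma additive_Pmap[simp]: "is_additive X h \<Longrightarrow> arr h \<Longrightarrow> is_additive X (Pmap X n h)"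
  by (induction n) (simp_all add: Pmap_Suc)

lemma idseq_typing[simp]:
  "A \<in> Ob \<Longrightarrow> arr (idseq X A n)" "A \<in> Ob \<Longrightarrow> src (idseq X A n) = Pn X n A"
  "A \<in> Ob \<Longrightarrow> tgt (idseq X A n) = A"
  by (induction n) simp_all

lemma additive_idseq[simp]: "A \<in> Ob \<Longrightarrow> is_additive X (idseq X A n)"
  by (induction n) simp_all

lemma Pmap_comp_idseq[simp]:
  "arr h \<Longrightarrow> A = src h \<Longrightarrow> B = tgt h \<Longrightarrow> Pmap X n h \<bullet> idseq X B n = idseq X A n \<bullet> h"
proof (induction n)
  case (Suc n)
  have "Pmap X (Suc n) h \<bullet> idseq X B (Suc n) = (Pmap X (Suc n) h \<bullet> \<pi>\<^sub>1 (Pn X n B) (Pn X n B)) \<bullet> idseq X B n"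
    using Suc.prems by (simp add: Pmap_Suc)
  also have "\<dots> = \<pi>\<^sub>1 (Pn X n A) (Pn X n A) \<bullet> (Pmap X n h \<bullet> idseq X B n)"
    using Suc.prems by (simp add: Pmap_Suc)
  also have "\<dots> = idseq X A (Suc n) \<bullet> h"
    using Suc by simp
  finally show ?case .
qed simp

lemma Pmap_comp_idseq'[simp]:
  "arr h \<Longrightarrow> A = src h \<Longrightarrow> B = tgt h \<Longrightarrow> arr k \<Longrightarrow> src k = B \<Longrightarrow>
   Pmap X n h \<bullet> (idseq X B n \<bullet> k) = idseq X A n \<bullet> (h \<bullet> k)"
  by (subst comp_assoc[symmetric]) simp_all

lemma idseq_prod_proj1[simp]:
  "A \<in> Ob \<Longrightarrow> idseq X (A \<otimes> A) n \<bullet> \<pi>\<^sub>1 A A = \<pi>\<^sub>1 (Pn X n A) (Pn X n A) \<bullet> idseq X A n"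
  by (induction n) simp_all

lemma idseq_prod_proj1'[simp]:
  "A \<in> Ob \<Longrightarrow> arr k \<Longrightarrow> src k = A \<Longrightarrow>
   idseq X (A \<otimes> A) n \<bullet> (\<pi>\<^sub>1 A A \<bullet> k) = \<pi>\<^sub>1 (Pn X n A) (Pn X n A) \<bullet> (idseq X A n \<bullet> k)"
  by (subst comp_assoc[symmetric]) simp_all

lemma idseq_idseq: "A \<in> Ob \<Longrightarrow> idseq X (Pn X m A) k \<bullet> idseq X A m = idseq X A (k + m)"
  by (induction k) simp_all

section \<open>Pre-D-sequences and their composition\<close>

lemma pre_DseqI:
  "A \<in> Ob \<Longrightarrow> B \<in> Ob \<Longrightarrow> (\<And>n. arr (f n)) \<Longrightarrow> (\<And>n. src (f n) = Pn X n A) \<Longrightarrow> (\<And>n. tgt (f n) = B) \<Longrightarrow>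
   is_pre_Dseq X A B f"
  by (simp add: is_pre_Dseq_def hom_def)

lemma pre_DseqD:
  assumes "is_pre_Dseq X A B f"
  shows "arr (f n)" "src (f n) = Pn X n A" "tgt (f n) = B" "A \<in> Ob" "B \<in> Ob"
  using assms by (simp_all add: is_pre_Dseq_def hom_def)

abbreviation T where "T \<equiv> Tseq X"
abbreviation comp_seq (infixl "\<star>" 70) where "f \<star> g \<equiv> seq_comp X f g"
abbreviation pre_seq (infixr "\<rhd>" 75) where "h \<rhd> f \<equiv> seq_pre X h f"
abbreviation post_seq (infixl "\<lhd>" 75) where "f \<lhd> k \<equiv> seq_post X f k"

text \<open>The sequence \<open>(h, \<pi>\<^sub>1 h, \<pi>\<^sub>1 \<pi>\<^sub>1 h, \<dots>)\<close> induced by a map \<open>h\<close> of \<open>X\<close>.\<close>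

abbreviation lift where "lift A h \<equiv> idseq X A \<lhd> h"

lemma Tseq_apply:
  "is_pre_Dseq X A B f \<Longrightarrow> T f n = \<langle>Pmap X n (\<pi>\<^sub>0 A A) \<bullet> f n, f (Suc n)\<rangle>"
  by (simp add: Tseq_def pre_DseqD)

lemma pre_Dseq_T: "is_pre_Dseq X A B f \<Longrightarrow> is_pre_Dseq X (A \<otimes> A) (B \<otimes> B) (T f)"
  by (rule pre_DseqI) (simp_all add: Tseq_apply pre_DseqD)

lemma T_pow_Suc: "(T ^^ Suc n) f = (T ^^ n) (T f)"
  by (simp only: funpow_Suc_right comp_def)

declare funpow.simps(2)[simp del] T_pow_Suc[simp]

lemma pre_Dseq_T_pow: "is_pre_Dseq X A B f \<Longrightarrow> is_pre_Dseq X (Pn X n A) (Pn X n B) ((T ^^ n) f)"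
proof (induction n)
  case (Suc n)
  then show ?case using pre_Dseq_T[OF Suc.IH[OF Suc.prems]] by (simp add: funpow.simps(2))
qed simp

lemma seq_comp_apply: "(f \<star> g) n = (T ^^ n) f 0 \<bullet> g n"
  by (simp add: seq_comp_def)

lemma pre_Dseq_seq_comp:
  assumes f: "is_pre_Dseq X A B f" and g: "is_pre_Dseq X B C g"
  shows "is_pre_Dseq X A C (f \<star> g)"
  by (rule pre_DseqI)
    (simp_all add: seq_comp_apply pre_DseqD[OF f] pre_DseqD[OF g] pre_DseqD[OF pre_Dseq_T_pow[OF f]])

lemma pre_Dseq_pre: "arr h \<Longrightarrow> tgt h = A \<Longrightarrow> is_pre_Dseq X A B f \<Longrightarrow> is_pre_Dseq X (src h) B (h \<rhd> f)"
  by (rule pre_DseqI) (simp_all add: seq_pre_def pre_DseqD)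

lemma pre_Dseq_lift: "arr h \<Longrightarrow> A = src h \<Longrightarrow> is_pre_Dseq X A (tgt h) (lift A h)"
  by (rule pre_DseqI) (simp_all add: seq_post_def)

lemma T_lift:
  assumes "arr h" "A = src h"
  shows "T (lift A h) = lift (A \<otimes> A) (h \<times>\<^sub>a h)"
proof
  fix n
  have "T (lift A h) n = \<langle>Pmap X n (\<pi>\<^sub>0 A A) \<bullet> (idseq X A n \<bullet> h), idseq X A (Suc n) \<bullet> h\<rangle>"
    using Tseq_apply[OF pre_Dseq_lift[OF assms], of n] by (simp only: seq_post_def)
  also have "\<dots> = lift (A \<otimes> A) (h \<times>\<^sub>a h) n"
    unfolding seq_post_def by (rule prod_arr_eqI[of "tgt h" "tgt h"]) (use assms in simp_all)
  finally show "T (lift A h) n = lift (A \<otimes> A) (h \<times>\<^sub>a h) n" .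
qed

lemma T_pow_lift: "arr h \<Longrightarrow> A = src h \<Longrightarrow> (T ^^ n) (lift A h) = lift (Pn X n A) (Pmap X n h)"
proof (induction n arbitrary: A h)
  case (Suc n)
  have "(T ^^ Suc n) (lift A h) = (T ^^ n) (lift (A \<otimes> A) (h \<times>\<^sub>a h))"
    by (simp only: T_pow_Suc T_lift[OF Suc.prems])
  also have "\<dots> = lift (Pn X n (A \<otimes> A)) (Pmap X n (h \<times>\<^sub>a h))"
    by (rule Suc.IH) (use Suc.prems in simp_all)
  finally show ?case by (simp add: Pmap_Suc')
qed simp

lemma T_pow_lift_0: "arr h \<Longrightarrow> A = src h \<Longrightarrow> (T ^^ n) (lift A h) 0 = Pmap X n h"
  using T_pow_lift[of h A n] by (simp add: seq_post_def)

lemma lift_seq_comp: "arr h \<Longrightarrow> A = src h \<Longrightarrow> lift A h \<star> f = h \<rhd> f"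
  by (rule ext) (simp add: seq_comp_apply T_pow_lift_0 seq_pre_def del: idseq.simps)

lemma T_pow_comp_idseq: "is_pre_Dseq X A B f \<Longrightarrow> (T ^^ n) f 0 \<bullet> idseq X B n = f n"
proof (induction n arbitrary: A B f)
  case 0
  then show ?case using pre_DseqD[OF 0] by simp
next
  case (Suc n)
  note f = pre_DseqD[OF Suc.prems]
  have Tf: "is_pre_Dseq X (A \<otimes> A) (B \<otimes> B) (T f)"
    by (rule pre_Dseq_T[OF Suc.prems])
  note Tnf = pre_DseqD[OF pre_Dseq_T_pow[OF Tf, of n]]
  have "(T ^^ Suc n) f 0 \<bullet> idseq X B (Suc n) = ((T ^^ n) (T f) 0 \<bullet> idseq X (B \<otimes> B) n) \<bullet> \<pi>\<^sub>1 B B"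
    using f Tnf by simp
  also have "\<dots> = T f n \<bullet> \<pi>\<^sub>1 B B"
    using Suc.IH[OF Tf] by simp
  also have "\<dots> = f (Suc n)"
    using f by (simp add: Tseq_apply[OF Suc.prems])
  finally show ?case .
qed

lemma seq_comp_lift:
  assumes f: "is_pre_Dseq X A B f" and "arr k" "src k = B"
  shows "f \<star> lift B k = f \<lhd> k"
proof
  fix n
  note f' = pre_DseqD[OF f] and Tnf = pre_DseqD[OF pre_Dseq_T_pow[OF f, of n]]
  have "(f \<star> lift B k) n = ((T ^^ n) f 0 \<bullet> idseq X B n) \<bullet> k"
    using f' Tnf assms by (simp add: seq_comp_apply seq_post_def)
  then show "(f \<star> lift B k) n = (f \<lhd> k) n"
    by (simp add: T_pow_comp_idseq[OF f] seq_post_def)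
qed

text \<open>The key to functoriality of \<open>T\<close> for \<open>\<star>\<close>, and hence to associativity of \<open>\<star>\<close>.\<close>

lemma T_pow_natural:
  assumes "is_pre_Dseq X A B F" "is_pre_Dseq X A' B' G"
    and "arr h" "src h = A" "tgt h = A'" "arr k" "src k = B" "tgt k = B'"
    and "\<And>m. F m \<bullet> k = Pmap X m h \<bullet> G m"
  shows "(T ^^ n) F 0 \<bullet> Pmap X n k = Pmap X n h \<bullet> (T ^^ n) G 0"
  using assms
proof (induction n arbitrary: A B A' B' F G h k)
  case (Suc n)
  note F = pre_DseqD[OF Suc.prems(1)] and G = pre_DseqD[OF Suc.prems(2)]
  have "T F m \<bullet> (k \<times>\<^sub>a k) = Pmap X m (h \<times>\<^sub>a h) \<bullet> T G m" for m
  proof -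
    have "T F m \<bullet> (k \<times>\<^sub>a k) = \<langle>Pmap X m (\<pi>\<^sub>0 A A) \<bullet> (F m \<bullet> k), F (Suc m) \<bullet> k\<rangle>"
      using F Suc.prems(3-8) by (simp add: Tseq_apply[OF Suc.prems(1)])
    also have "\<dots> = \<langle>Pmap X m (\<pi>\<^sub>0 A A) \<bullet> (Pmap X m h \<bullet> G m), Pmap X (Suc m) h \<bullet> G (Suc m)\<rangle>"
      by (simp only: Suc.prems(9))
    also have "\<dots> = Pmap X m (h \<times>\<^sub>a h) \<bullet> T G m"
      using F G Suc.prems(3-8) by (simp add: Tseq_apply[OF Suc.prems(2)] Pmap_Suc')
    finally show ?thesis .
  qed
  then have "(T ^^ n) (T F) 0 \<bullet> Pmap X n (k \<times>\<^sub>a k) = Pmap X n (h \<times>\<^sub>a h) \<bullet> (T ^^ n) (T G) 0"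
    by (intro Suc.IH[OF pre_Dseq_T[OF Suc.prems(1)] pre_Dseq_T[OF Suc.prems(2)]])
      (use Suc.prems(3-8) in simp_all)
  then show ?case by (simp add: Pmap_Suc')
qed simp

lemma T_seq_comp:
  assumes f: "is_pre_Dseq X A B f" and g: "is_pre_Dseq X B C g"
  shows "T (f \<star> g) = T f \<star> T g"
proof
  fix m
  note f' = pre_DseqD[OF f] and g' = pre_DseqD[OF g]
  note TmTf = pre_DseqD[OF pre_Dseq_T_pow[OF pre_Dseq_T[OF f], of m]]
    and Tmf = pre_DseqD[OF pre_Dseq_T_pow[OF f, of m]]
  have natural: "(T ^^ m) (T f) 0 \<bullet> Pmap X m (\<pi>\<^sub>0 B B) = Pmap X m (\<pi>\<^sub>0 A A) \<bullet> (T ^^ m) f 0"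
    by (rule T_pow_natural[OF pre_Dseq_T[OF f] f]) (use f' in \<open>simp_all add: Tseq_apply[OF f]\<close>)
  have "(T f \<star> T g) m = (T ^^ m) (T f) 0 \<bullet> \<langle>Pmap X m (\<pi>\<^sub>0 B B) \<bullet> g m, g (Suc m)\<rangle>"
    by (simp add: seq_comp_apply Tseq_apply[OF g])
  also have "\<dots> = \<langle>((T ^^ m) (T f) 0 \<bullet> Pmap X m (\<pi>\<^sub>0 B B)) \<bullet> g m, (T ^^ m) (T f) 0 \<bullet> g (Suc m)\<rangle>"
    using f' g' TmTf by simp
  also have "\<dots> = \<langle>(Pmap X m (\<pi>\<^sub>0 A A) \<bullet> (T ^^ m) f 0) \<bullet> g m, (T ^^ m) (T f) 0 \<bullet> g (Suc m)\<rangle>"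
    by (simp only: natural)
  also have "\<dots> = T (f \<star> g) m"
    using f' g' Tmf by (simp add: Tseq_apply[OF pre_Dseq_seq_comp[OF f g]] seq_comp_apply)
  finally show "T (f \<star> g) m = (T f \<star> T g) m" by simp
qed

lemma T_pow_seq_comp:
  "is_pre_Dseq X A B f \<Longrightarrow> is_pre_Dseq X B C g \<Longrightarrow> (T ^^ n) (f \<star> g) = (T ^^ n) f \<star> (T ^^ n) g"
proof (induction n arbitrary: A B C f g)
  case (Suc n)
  have "(T ^^ Suc n) (f \<star> g) = (T ^^ n) (T f \<star> T g)"
    by (simp add: T_seq_comp[OF Suc.prems])
  also have "\<dots> = (T ^^ n) (T f) \<star> (T ^^ n) (T g)"
    by (rule Suc.IH[OF pre_Dseq_T[OF Suc.prems(1)] pre_Dseq_T[OF Suc.prems(2)]])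
  finally show ?case by simp
qed simp

lemma seq_comp_assoc:
  assumes f: "is_pre_Dseq X A B f" and g: "is_pre_Dseq X B C g" and h: "is_pre_Dseq X C D h"
  shows "(f \<star> g) \<star> h = f \<star> (g \<star> h)"
proof
  fix n
  note Tnf = pre_DseqD[OF pre_Dseq_T_pow[OF f, of n]] and Tng = pre_DseqD[OF pre_Dseq_T_pow[OF g, of n]]
  have "((f \<star> g) \<star> h) n = ((T ^^ n) f 0 \<bullet> (T ^^ n) g 0) \<bullet> h n"
    by (simp add: seq_comp_apply T_pow_seq_comp[OF f g])
  also have "\<dots> = (T ^^ n) f 0 \<bullet> ((T ^^ n) g 0 \<bullet> h n)"
    using Tnf Tng pre_DseqD[OF h] by simp
  finally show "((f \<star> g) \<star> h) n = (f \<star> (g \<star> h)) n"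
    by (simp only: seq_comp_apply)
qed

lemma lift_id: "A \<in> Ob \<Longrightarrow> lift A (\<one> A) = idseq X A"
  by (rule ext) (simp add: seq_post_def)

lemma idseq_seq_comp: "is_pre_Dseq X A B f \<Longrightarrow> idseq X A \<star> f = f"
  using lift_seq_comp[of "\<one> A" A f] by (simp add: pre_DseqD lift_id seq_pre_def)

lemma seq_comp_idseq: "is_pre_Dseq X A B f \<Longrightarrow> f \<star> idseq X B = f"
  using seq_comp_lift[of A B f "\<one> B"] by (simp add: pre_DseqD lift_id seq_post_def)

lemma pre_seq_comp:
  assumes "arr h" "tgt h = A" "is_pre_Dseq X A B F" "is_pre_Dseq X B C G"
  shows "h \<rhd> (F \<star> G) = (h \<rhd> F) \<star> G"
  using seq_comp_assoc[OF pre_Dseq_lift[OF assms(1) refl, unfolded assms(2)] assms(3,4)] assms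
  by (simp add: lift_seq_comp)

lemma post_seq_comp:
  assumes "is_pre_Dseq X A B F" "arr k" "src k = B" "tgt k = B'" "is_pre_Dseq X B' C G"
  shows "(F \<lhd> k) \<star> G = F \<star> (k \<rhd> G)"
  using seq_comp_assoc[OF assms(1) pre_Dseq_lift[OF assms(2) refl, unfolded assms(3,4)] assms(5)] assms
  by (simp add: lift_seq_comp seq_comp_lift)

lemma Dop_pow_apply: "(Dop ^^ m) f n = f (n + m)"
  by (induction m arbitrary: n) (simp_all add: funpow.simps(2) Dop_def)

lemma pre_Dseq_Dop_pow: "is_pre_Dseq X A B f \<Longrightarrow> is_pre_Dseq X (Pn X m A) B ((Dop ^^ m) f)"
  by (rule pre_DseqI) (simp_all add: Dop_pow_apply pre_DseqD)

lemma pre_Dseq_Dop: "is_pre_Dseq X A B f \<Longrightarrow> is_pre_Dseq X (A \<otimes> A) B (Dop f)"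
  using pre_Dseq_Dop_pow[of A B f 1] by (simp add: funpow.simps(2))

lemma Dop_seq_comp: "Dop (F \<star> G) = T F \<star> Dop G"
  by (rule ext) (simp add: Dop_def seq_comp_apply)

lemma Dop_pow_seq_comp: "(Dop ^^ m) (F \<star> G) = (T ^^ m) F \<star> (Dop ^^ m) G"
  by (induction m) (simp_all add: funpow.simps(2) Dop_seq_comp del: T_pow_Suc)

lemma pre_Dseq_zero: "C \<in> Ob \<Longrightarrow> B \<in> Ob \<Longrightarrow> is_pre_Dseq X C B (seq_zero X C B)"
  by (rule pre_DseqI) (simp_all add: seq_zero_def)

lemma pre_Dseq_plus: "is_pre_Dseq X C B f \<Longrightarrow> is_pre_Dseq X C B g \<Longrightarrow> is_pre_Dseq X C B (seq_plus X f g)"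
  by (rule pre_DseqI) (simp_all add: seq_plus_def pre_DseqD)

lemma pre_Dseq_pair:
  "is_pre_Dseq X D A f \<Longrightarrow> is_pre_Dseq X D B g \<Longrightarrow> is_pre_Dseq X D (A \<otimes> B) (\<lambda>n. \<langle>f n, g n\<rangle>)"
  by (rule pre_DseqI) (simp_all add: pre_DseqD)

lemma seq_comp_plus:
  assumes "is_pre_Dseq X A B F" "is_pre_Dseq X B C G" "is_pre_Dseq X B C K"
  shows "F \<star> seq_plus X G K = seq_plus X (F \<star> G) (F \<star> K)"
  by (rule ext)
    (use pre_DseqD[OF pre_Dseq_T_pow[OF assms(1)]] pre_DseqD[OF assms(2)] pre_DseqD[OF assms(3)]
      in \<open>simp add: seq_comp_apply seq_plus_def\<close>)

lemma seq_comp_zero: "is_pre_Dseq X A B F \<Longrightarrow> C \<in> Ob \<Longrightarrow> F \<star> seq_zero X B C = seq_zero X A C"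
  by (rule ext) (simp add: seq_comp_apply seq_zero_def pre_DseqD[OF pre_Dseq_T_pow])

section \<open>D-sequences\<close>

abbreviation \<iota>\<^sub>0 where "\<iota>\<^sub>0 C \<equiv> \<langle>\<one> C, \<zero> C C\<rangle>"
abbreviation \<iota>\<^sub>1 where "\<iota>\<^sub>1 C \<equiv> \<langle>\<zero> C C, \<one> C\<rangle>"
abbreviation \<sigma> where "\<sigma> C \<equiv> \<pi>\<^sub>0 C C \<oplus> \<pi>\<^sub>1 C C"

definition Dseq_axioms :: "'o \<Rightarrow> 'o \<Rightarrow> (nat \<Rightarrow> 'm) \<Rightarrow> (nat \<Rightarrow> 'm) \<Rightarrow> bool" where
  "Dseq_axioms C B g g' \<longleftrightarrow>
     \<iota>\<^sub>0 C \<rhd> g = seq_zero X C B \<and>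
     (\<one> C \<times>\<^sub>a \<sigma> C) \<rhd> g = seq_plus X ((\<one> C \<times>\<^sub>a \<pi>\<^sub>0 C C) \<rhd> g) ((\<one> C \<times>\<^sub>a \<pi>\<^sub>1 C C) \<rhd> g) \<and>
     ell X C \<rhd> g' = g \<and> cmid X C \<rhd> g' = g'"

lemma is_Dseq_iff:
  "is_Dseq X A B f \<longleftrightarrow> is_pre_Dseq X A B f \<and>
     (\<forall>n. Dseq_axioms (Pn X n A) B ((Dop ^^ Suc n) f) ((Dop ^^ Suc (Suc n)) f))"
  unfolding is_Dseq_def Dseq_axioms_def Let_def by blast

lemma is_Dseq_pre_Dseq: "is_Dseq X A B f \<Longrightarrow> is_pre_Dseq X A B f"
  by (simp add: is_Dseq_iff)

lemma is_Dseq_axioms: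
  "is_Dseq X A B f \<Longrightarrow> Dseq_axioms (Pn X n A) B ((Dop ^^ Suc n) f) ((Dop ^^ Suc (Suc n)) f)"
  by (simp add: is_Dseq_iff)

lemma is_Dseq_axioms_0: "is_Dseq X A B f \<Longrightarrow> Dseq_axioms A B (Dop f) (Dop (Dop f))"
  using is_Dseq_axioms[of A B f 0] by (simp add: funpow.simps(2))

lemma Dop_pow_Dop_pow: "(Dop ^^ a) ((Dop ^^ b) f) = (Dop ^^ (a + b)) f"
  by (simp add: funpow_add)

lemma is_Dseq_Dop_pow:
  assumes f: "is_Dseq X A B f"
  shows "is_Dseq X (Pn X m A) B ((Dop ^^ m) f)"
  unfolding is_Dseq_iff
proof (intro conjI allI)
  show "is_pre_Dseq X (Pn X m A) B ((Dop ^^ m) f)"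
    by (rule pre_Dseq_Dop_pow[OF is_Dseq_pre_Dseq[OF f]])
  fix n
  show "Dseq_axioms (Pn X n (Pn X m A)) B ((Dop ^^ Suc n) ((Dop ^^ m) f)) ((Dop ^^ Suc (Suc n)) ((Dop ^^ m) f))"
    using is_Dseq_axioms[OF f, of "n + m"] by (simp add: Dop_pow_Dop_pow)
qed

lemma is_Dseq_Dop: "is_Dseq X A B f \<Longrightarrow> is_Dseq X (A \<otimes> A) B (Dop f)"
  using is_Dseq_Dop_pow[of A B f 1] by (simp add: funpow.simps(2))

lemma ell_eq: "ell X C = \<iota>\<^sub>0 C \<times>\<^sub>a \<iota>\<^sub>1 C"
  by (simp add: ell_def)

lemma cmid_eq:
  "cmid X C = \<langle>\<langle>\<pi>\<^sub>0 (C \<otimes> C) (C \<otimes> C) \<bullet> \<pi>\<^sub>0 C C, \<pi>\<^sub>1 (C \<otimes> C) (C \<otimes> C) \<bullet> \<pi>\<^sub>0 C C\<rangle>,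
               \<langle>\<pi>\<^sub>0 (C \<otimes> C) (C \<otimes> C) \<bullet> \<pi>\<^sub>1 C C, \<pi>\<^sub>1 (C \<otimes> C) (C \<otimes> C) \<bullet> \<pi>\<^sub>1 C C\<rangle>\<rangle>"
  by (simp add: cmid_def Let_def)

lemma ell_typing[simp]:
  "C \<in> Ob \<Longrightarrow> arr (ell X C)" "C \<in> Ob \<Longrightarrow> src (ell X C) = C \<otimes> C"
  "C \<in> Ob \<Longrightarrow> tgt (ell X C) = (C \<otimes> C) \<otimes> (C \<otimes> C)"
  by (simp_all add: ell_eq)

lemma cmid_typing[simp]:
  "C \<in> Ob \<Longrightarrow> arr (cmid X C)" "C \<in> Ob \<Longrightarrow> src (cmid X C) = (C \<otimes> C) \<otimes> (C \<otimes> C)"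
  "C \<in> Ob \<Longrightarrow> tgt (cmid X C) = (C \<otimes> C) \<otimes> (C \<otimes> C)"
  by (simp_all add: cmid_eq)

lemma inj0_natural: "is_additive X z \<Longrightarrow> arr z \<Longrightarrow> \<iota>\<^sub>0 (src z) \<bullet> (z \<times>\<^sub>a z) = z \<bullet> \<iota>\<^sub>0 (tgt z)"
  by simp

lemma cross_proj_natural:
  "arr z \<Longrightarrow> (\<one> (src z) \<times>\<^sub>a \<pi>\<^sub>0 (src z) (src z)) \<bullet> (z \<times>\<^sub>a z)
     = (z \<times>\<^sub>a (z \<times>\<^sub>a z)) \<bullet> (\<one> (tgt z) \<times>\<^sub>a \<pi>\<^sub>0 (tgt z) (tgt z))"
  "arr z \<Longrightarrow> (\<one> (src z) \<times>\<^sub>a \<pi>\<^sub>1 (src z) (src z)) \<bullet> (z \<times>\<^sub>a z)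
     = (z \<times>\<^sub>a (z \<times>\<^sub>a z)) \<bullet> (\<one> (tgt z) \<times>\<^sub>a \<pi>\<^sub>1 (tgt z) (tgt z))"
  by simp_all

lemma cross_sum_natural:
  "is_additive X z \<Longrightarrow> arr z \<Longrightarrow> (\<one> (src z) \<times>\<^sub>a \<sigma> (src z)) \<bullet> (z \<times>\<^sub>a z)
     = (z \<times>\<^sub>a (z \<times>\<^sub>a z)) \<bullet> (\<one> (tgt z) \<times>\<^sub>a \<sigma> (tgt z))"
  by simp

lemma ell_natural:
  "is_additive X z \<Longrightarrow> arr z \<Longrightarrow> ell X (src z) \<bullet> ((z \<times>\<^sub>a z) \<times>\<^sub>a (z \<times>\<^sub>a z)) = (z \<times>\<^sub>a z) \<bullet> ell X (tgt z)"
  by (simp add: ell_eq)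

lemma cmid_natural:
  "arr z \<Longrightarrow> cmid X (src z) \<bullet> ((z \<times>\<^sub>a z) \<times>\<^sub>a (z \<times>\<^sub>a z)) = ((z \<times>\<^sub>a z) \<times>\<^sub>a (z \<times>\<^sub>a z)) \<bullet> cmid X (tgt z)"
  by (simp add: cmid_eq)

text \<open>The common shape of \<open>T F\<close> and of all its derivatives, see \<open>Dop_pow_T\<close>.\<close>

definition tangent_pair :: "'m \<Rightarrow> (nat \<Rightarrow> 'm) \<Rightarrow> (nat \<Rightarrow> 'm) \<Rightarrow> nat \<Rightarrow> 'm" where
  "tangent_pair y U V = (\<lambda>k. \<langle>Pmap X k y \<bullet> U k, V k\<rangle>)"

lemma T_eq_tangent_pair: "is_pre_Dseq X A B F \<Longrightarrow> T F = tangent_pair (\<pi>\<^sub>0 A A) F (Dop F)"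
  by (rule ext) (simp add: tangent_pair_def Tseq_apply Dop_def)

lemma Dop_pow_T:
  "is_pre_Dseq X A B F \<Longrightarrow>
   (Dop ^^ j) (T F) = tangent_pair (Pmap X j (\<pi>\<^sub>0 A A)) ((Dop ^^ j) F) ((Dop ^^ Suc j) F)"
  by (rule ext) (simp add: tangent_pair_def Tseq_apply Dop_pow_apply)

lemma pre_Dseq_tangent_pair:
  "arr y \<Longrightarrow> is_pre_Dseq X (tgt y) B U \<Longrightarrow> is_pre_Dseq X (src y) B' V \<Longrightarrow>
   is_pre_Dseq X (src y) (B \<otimes> B') (tangent_pair y U V)"
  by (rule pre_DseqI) (simp_all add: tangent_pair_def pre_DseqD)

lemma pre_tangent_pair:
  "arr h \<Longrightarrow> tgt h = src y \<Longrightarrow> arr y \<Longrightarrow> is_pre_Dseq X (tgt y) B U \<Longrightarrow> is_pre_Dseq X (src y) B' V \<Longrightarrow>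
   h \<rhd> tangent_pair y U V = tangent_pair (h \<bullet> y) U (h \<rhd> V)"
  by (rule ext) (simp add: tangent_pair_def seq_pre_def pre_DseqD)

lemma tangent_pair_comp:
  "arr y \<Longrightarrow> arr h \<Longrightarrow> tgt y = src h \<Longrightarrow> is_pre_Dseq X (tgt h) B U \<Longrightarrow>
   tangent_pair (y \<bullet> h) U V = tangent_pair y (h \<rhd> U) V"
  by (rule ext) (simp add: tangent_pair_def seq_pre_def pre_DseqD)

lemma tangent_pair_plus:
  "arr y \<Longrightarrow> is_pre_Dseq X (tgt y) B U\<^sub>1 \<Longrightarrow> is_pre_Dseq X (tgt y) B U\<^sub>2 \<Longrightarrow>
   is_pre_Dseq X (src y) B' V\<^sub>1 \<Longrightarrow> is_pre_Dseq X (src y) B' V\<^sub>2 \<Longrightarrow>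
   seq_plus X (tangent_pair y U\<^sub>1 V\<^sub>1) (tangent_pair y U\<^sub>2 V\<^sub>2)
     = tangent_pair y (seq_plus X U\<^sub>1 U\<^sub>2) (seq_plus X V\<^sub>1 V\<^sub>2)"
  by (rule ext) (simp add: tangent_pair_def seq_plus_def pre_DseqD pair_plus)

lemma tangent_pair_zero:
  "arr y \<Longrightarrow> B \<in> Ob \<Longrightarrow> B' \<in> Ob \<Longrightarrow>
   tangent_pair y (seq_zero X (tgt y) B) (seq_zero X (src y) B') = seq_zero X (src y) (B \<otimes> B')"
  by (rule ext) (simp add: tangent_pair_def seq_zero_def pair_zero)

context
  fixes z :: 'm and C :: 'o
  assumes z: "is_additive X z" "arr z" "src z = C \<otimes> C" "tgt z = C"
begin

lemma cross_pre_tangent_pair: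
  assumes p: "arr p" "src p = C \<otimes> C" "tgt p = C"
    and p': "arr p'" "src p' = (C \<otimes> C) \<otimes> (C \<otimes> C)" "tgt p' = C \<otimes> C"
    and natural: "(\<one> (C \<otimes> C) \<times>\<^sub>a p') \<bullet> (z \<times>\<^sub>a z) = (z \<times>\<^sub>a (z \<times>\<^sub>a z)) \<bullet> (\<one> C \<times>\<^sub>a p)"
    and U: "is_pre_Dseq X (C \<otimes> C) B U" and V: "is_pre_Dseq X ((C \<otimes> C) \<otimes> (C \<otimes> C)) B V"
  shows "(\<one> (C \<otimes> C) \<times>\<^sub>a p') \<rhd> tangent_pair (z \<times>\<^sub>a z) U V
    = tangent_pair (z \<times>\<^sub>a (z \<times>\<^sub>a z)) ((\<one> C \<times>\<^sub>a p) \<rhd> U) ((\<one> (C \<otimes> C) \<times>\<^sub>a p') \<rhd> V)"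
proof -
  have C: "C \<in> Ob"
    using z by (metis tgt_obj)
  have "(\<one> (C \<otimes> C) \<times>\<^sub>a p') \<rhd> tangent_pair (z \<times>\<^sub>a z) U V
      = tangent_pair ((\<one> (C \<otimes> C) \<times>\<^sub>a p') \<bullet> (z \<times>\<^sub>a z)) U ((\<one> (C \<otimes> C) \<times>\<^sub>a p') \<rhd> V)"
    by (rule pre_tangent_pair) (use C z p' U V in simp_all)
  also have "\<dots> = tangent_pair (z \<times>\<^sub>a (z \<times>\<^sub>a z)) ((\<one> C \<times>\<^sub>a p) \<rhd> U) ((\<one> (C \<otimes> C) \<times>\<^sub>a p') \<rhd> V)"
    unfolding natural by (rule tangent_pair_comp) (use C z p U in simp_all)
  finally show ?thesis .
qed

lemma sum_pre_tangent_pair: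
  assumes U: "is_pre_Dseq X (C \<otimes> C) B U" and V: "is_pre_Dseq X ((C \<otimes> C) \<otimes> (C \<otimes> C)) B V"
    and sum_U: "(\<one> C \<times>\<^sub>a \<sigma> C) \<rhd> U = seq_plus X ((\<one> C \<times>\<^sub>a \<pi>\<^sub>0 C C) \<rhd> U) ((\<one> C \<times>\<^sub>a \<pi>\<^sub>1 C C) \<rhd> U)"
    and sum_V: "(\<one> (C \<otimes> C) \<times>\<^sub>a \<sigma> (C \<otimes> C)) \<rhd> V =
      seq_plus X ((\<one> (C \<otimes> C) \<times>\<^sub>a \<pi>\<^sub>0 (C \<otimes> C) (C \<otimes> C)) \<rhd> V) ((\<one> (C \<otimes> C) \<times>\<^sub>a \<pi>\<^sub>1 (C \<otimes> C) (C \<otimes> C)) \<rhd> V)"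
  shows "(\<one> (C \<otimes> C) \<times>\<^sub>a \<sigma> (C \<otimes> C)) \<rhd> tangent_pair (z \<times>\<^sub>a z) U V =
    seq_plus X ((\<one> (C \<otimes> C) \<times>\<^sub>a \<pi>\<^sub>0 (C \<otimes> C) (C \<otimes> C)) \<rhd> tangent_pair (z \<times>\<^sub>a z) U V)
               ((\<one> (C \<otimes> C) \<times>\<^sub>a \<pi>\<^sub>1 (C \<otimes> C) (C \<otimes> C)) \<rhd> tangent_pair (z \<times>\<^sub>a z) U V)"
    (is "?s' \<rhd> ?F = seq_plus X (?p0' \<rhd> ?F) (?p1' \<rhd> ?F)")
proof -
  let ?s = "\<one> C \<times>\<^sub>a \<sigma> C" and ?p0 = "\<one> C \<times>\<^sub>a \<pi>\<^sub>0 C C" and ?p1 = "\<one> C \<times>\<^sub>a \<pi>\<^sub>1 C C"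
  have C: "C \<in> Ob"
    using z by (metis tgt_obj)
  have split_U: "is_pre_Dseq X (C \<otimes> (C \<otimes> C)) B (?p0 \<rhd> U)" "is_pre_Dseq X (C \<otimes> (C \<otimes> C)) B (?p1 \<rhd> U)"
    using pre_Dseq_pre[OF _ _ U, of ?p0] pre_Dseq_pre[OF _ _ U, of ?p1] C by simp_all
  have split_V:
    "is_pre_Dseq X ((C \<otimes> C) \<otimes> ((C \<otimes> C) \<otimes> (C \<otimes> C))) B (?p0' \<rhd> V)"
    "is_pre_Dseq X ((C \<otimes> C) \<otimes> ((C \<otimes> C) \<otimes> (C \<otimes> C))) B (?p1' \<rhd> V)"
    using pre_Dseq_pre[OF _ _ V, of ?p0'] pre_Dseq_pre[OF _ _ V, of ?p1'] C by simp_all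
  have "?s' \<rhd> ?F = tangent_pair (z \<times>\<^sub>a (z \<times>\<^sub>a z)) (?s \<rhd> U) (?s' \<rhd> V)"
    by (rule cross_pre_tangent_pair[OF _ _ _ _ _ _ _ U V])
      (use C z cross_sum_natural[OF z(1,2)] in simp_all)
  also have "\<dots> = tangent_pair (z \<times>\<^sub>a (z \<times>\<^sub>a z)) (seq_plus X (?p0 \<rhd> U) (?p1 \<rhd> U))
      (seq_plus X (?p0' \<rhd> V) (?p1' \<rhd> V))"
    by (simp only: sum_U sum_V)
  also have "\<dots> = seq_plus X (tangent_pair (z \<times>\<^sub>a (z \<times>\<^sub>a z)) (?p0 \<rhd> U) (?p0' \<rhd> V))
      (tangent_pair (z \<times>\<^sub>a (z \<times>\<^sub>a z)) (?p1 \<rhd> U) (?p1' \<rhd> V))"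
    by (rule tangent_pair_plus[symmetric]) (use z split_U split_V in simp_all)
  also have "\<dots> = seq_plus X (?p0' \<rhd> ?F) (?p1' \<rhd> ?F)"
    using cross_pre_tangent_pair[OF _ _ _ _ _ _ _ U V, of "\<pi>\<^sub>0 C C" "\<pi>\<^sub>0 (C \<otimes> C) (C \<otimes> C)"]
      cross_pre_tangent_pair[OF _ _ _ _ _ _ _ U V, of "\<pi>\<^sub>1 C C" "\<pi>\<^sub>1 (C \<otimes> C) (C \<otimes> C)"]
      C z cross_proj_natural[OF z(2)]
    by simp
  finally show ?thesis .
qed

lemma Dseq_axioms_tangent_pair:
  assumes U: "is_pre_Dseq X (C \<otimes> C) B U" and V: "is_pre_Dseq X ((C \<otimes> C) \<otimes> (C \<otimes> C)) B V"
    and W: "is_pre_Dseq X (((C \<otimes> C) \<otimes> (C \<otimes> C)) \<otimes> ((C \<otimes> C) \<otimes> (C \<otimes> C))) B W"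
    and UV: "Dseq_axioms C B U V" and VW: "Dseq_axioms (C \<otimes> C) B V W"
  shows "Dseq_axioms (C \<otimes> C) (B \<otimes> B) (tangent_pair (z \<times>\<^sub>a z) U V)
    (tangent_pair ((z \<times>\<^sub>a z) \<times>\<^sub>a (z \<times>\<^sub>a z)) V W)"
proof -
  let ?y = "z \<times>\<^sub>a z"
  note UV = UV[unfolded Dseq_axioms_def] and VW = VW[unfolded Dseq_axioms_def]
  have C: "C \<in> Ob" and B: "B \<in> Ob"
    using z pre_DseqD[OF U] by (metis tgt_obj)+
  have y: "arr ?y" "src ?y = (C \<otimes> C) \<otimes> (C \<otimes> C)" "tgt ?y = C \<otimes> C"
    using z by simp_all
  have "\<iota>\<^sub>0 (C \<otimes> C) \<rhd> tangent_pair ?y U V = tangent_pair (\<iota>\<^sub>0 (C \<otimes> C) \<bullet> ?y) U (\<iota>\<^sub>0 (C \<otimes> C) \<rhd> V)"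
    by (rule pre_tangent_pair) (use y C U V in simp_all)
  also have "\<dots> = tangent_pair (z \<bullet> \<iota>\<^sub>0 C) U (seq_zero X (C \<otimes> C) B)"
    using inj0_natural[OF z(1,2)] z VW by simp
  also have "\<dots> = tangent_pair z (\<iota>\<^sub>0 C \<rhd> U) (seq_zero X (C \<otimes> C) B)"
    by (rule tangent_pair_comp) (use z C U in simp_all)
  also have "\<dots> = seq_zero X (C \<otimes> C) (B \<otimes> B)"
    using UV tangent_pair_zero[of z B B] z B by simp
  finally have inj0: "\<iota>\<^sub>0 (C \<otimes> C) \<rhd> tangent_pair ?y U V = seq_zero X (C \<otimes> C) (B \<otimes> B)" .
  have "ell X (C \<otimes> C) \<rhd> tangent_pair (?y \<times>\<^sub>a ?y) V W
      = tangent_pair (ell X (C \<otimes> C) \<bullet> (?y \<times>\<^sub>a ?y)) V (ell X (C \<otimes> C) \<rhd> W)"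
    by (rule pre_tangent_pair) (use y C V W in simp_all)
  also have "\<dots> = tangent_pair (?y \<bullet> ell X C) V V"
    using ell_natural[OF z(1,2)] z VW by simp
  also have "\<dots> = tangent_pair ?y U V"
    using tangent_pair_comp[of ?y "ell X C" B V V] C y V UV by simp
  finally have ell: "ell X (C \<otimes> C) \<rhd> tangent_pair (?y \<times>\<^sub>a ?y) V W = tangent_pair ?y U V" .
  have "cmid X (C \<otimes> C) \<rhd> tangent_pair (?y \<times>\<^sub>a ?y) V W
      = tangent_pair (cmid X (C \<otimes> C) \<bullet> (?y \<times>\<^sub>a ?y)) V (cmid X (C \<otimes> C) \<rhd> W)"
    by (rule pre_tangent_pair) (use y C V W in simp_all)
  also have "\<dots> = tangent_pair ((?y \<times>\<^sub>a ?y) \<bullet> cmid X C) V W"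
    using cmid_natural[OF z(2)] z VW by simp
  also have "\<dots> = tangent_pair (?y \<times>\<^sub>a ?y) V W"
    using tangent_pair_comp[of "?y \<times>\<^sub>a ?y" "cmid X C" B V W] C y V UV by simp
  finally have cmid: "cmid X (C \<otimes> C) \<rhd> tangent_pair (?y \<times>\<^sub>a ?y) V W = tangent_pair (?y \<times>\<^sub>a ?y) V W" .
  show ?thesis
    unfolding Dseq_axioms_def using inj0 sum_pre_tangent_pair[OF U V] UV VW ell cmid by blast
qed

end

lemma is_Dseq_T:
  assumes F: "is_Dseq X A B F"
  shows "is_Dseq X (A \<otimes> A) (B \<otimes> B) (T F)"
  unfolding is_Dseq_iff
proof (intro conjI allI)
  have F': "is_pre_Dseq X A B F"
    by (rule is_Dseq_pre_Dseq[OF F])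
  show "is_pre_Dseq X (A \<otimes> A) (B \<otimes> B) (T F)"
    by (rule pre_Dseq_T[OF F'])
  fix m
  define C z where "C = Pn X m A" and "z = Pmap X m (\<pi>\<^sub>0 A A)"
  have A: "A \<in> Ob"
    using pre_DseqD[OF F'] by simp
  have z: "is_additive X z" "arr z" "src z = C \<otimes> C" "tgt z = C"
    using A by (simp_all add: C_def z_def)
  have "Dseq_axioms (C \<otimes> C) (B \<otimes> B)
      (tangent_pair (z \<times>\<^sub>a z) ((Dop ^^ Suc m) F) ((Dop ^^ Suc (Suc m)) F))
      (tangent_pair ((z \<times>\<^sub>a z) \<times>\<^sub>a (z \<times>\<^sub>a z)) ((Dop ^^ Suc (Suc m)) F) ((Dop ^^ Suc (Suc (Suc m))) F))"
    by (rule Dseq_axioms_tangent_pair[OF z])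
      (use is_Dseq_axioms[OF F, of m] is_Dseq_axioms[OF F, of "Suc m"]
        pre_Dseq_Dop_pow[OF F', of "Suc m"] pre_Dseq_Dop_pow[OF F', of "Suc (Suc m)"]
        pre_Dseq_Dop_pow[OF F', of "Suc (Suc (Suc m))"] in \<open>simp_all add: C_def\<close>)
  then show "Dseq_axioms (Pn X m (A \<otimes> A)) (B \<otimes> B) ((Dop ^^ Suc m) (T F)) ((Dop ^^ Suc (Suc m)) (T F))"
    using Dop_pow_T[OF F', of "Suc m"] Dop_pow_T[OF F', of "Suc (Suc m)"]
    by (simp add: C_def z_def Pmap_Suc)
qed

lemma cross_pre_T:
  assumes F: "is_pre_Dseq X A B F" and p: "arr p" "src p = A \<otimes> A" "tgt p = A"
  shows "(\<one> A \<times>\<^sub>a p) \<rhd> T F = tangent_pair (\<pi>\<^sub>0 A (A \<otimes> A)) F ((\<one> A \<times>\<^sub>a p) \<rhd> Dop F)"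
proof -
  have A: "A \<in> Ob"
    using pre_DseqD[OF F] by simp
  have "(\<one> A \<times>\<^sub>a p) \<rhd> T F = tangent_pair ((\<one> A \<times>\<^sub>a p) \<bullet> \<pi>\<^sub>0 A A) F ((\<one> A \<times>\<^sub>a p) \<rhd> Dop F)"
    unfolding T_eq_tangent_pair[OF F]
    by (rule pre_tangent_pair) (use A p F pre_Dseq_Dop[OF F] in simp_all)
  then show ?thesis
    using A p by simp
qed

lemma inj0_pre_T:
  assumes F: "is_pre_Dseq X A B F" and inj0: "\<iota>\<^sub>0 A \<rhd> Dop F = seq_zero X A B"
  shows "\<iota>\<^sub>0 A \<rhd> T F = F \<lhd> \<iota>\<^sub>0 B"
proof -
  have A: "A \<in> Ob" and B: "B \<in> Ob"
    using pre_DseqD[OF F] by simp_all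
  have "\<iota>\<^sub>0 A \<rhd> T F = tangent_pair (\<iota>\<^sub>0 A \<bullet> \<pi>\<^sub>0 A A) F (\<iota>\<^sub>0 A \<rhd> Dop F)"
    unfolding T_eq_tangent_pair[OF F]
    by (rule pre_tangent_pair) (use A F pre_Dseq_Dop[OF F] in simp_all)
  also have "\<dots> = tangent_pair (\<one> A) F (seq_zero X A B)"
    using A inj0 by simp
  also have "\<dots> = F \<lhd> \<iota>\<^sub>0 B"
    by (rule ext) (use pre_DseqD[OF F] in \<open>simp add: tangent_pair_def seq_post_def seq_zero_def\<close>)
  finally show ?thesis .
qed

lemma ell_pre_TT:
  assumes F: "is_pre_Dseq X A B F"
    and inj0: "\<iota>\<^sub>0 A \<rhd> Dop F = seq_zero X A B" and ell: "ell X A \<rhd> Dop (Dop F) = Dop F"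
  shows "ell X A \<rhd> T (T F) = T F \<lhd> ell X B"
proof -
  have A: "A \<in> Ob" and B: "B \<in> Ob"
    using pre_DseqD[OF F] by simp_all
  have TF: "is_pre_Dseq X (A \<otimes> A) (B \<otimes> B) (T F)" and DF: "is_pre_Dseq X (A \<otimes> A) B (Dop F)"
    using pre_Dseq_T[OF F] pre_Dseq_Dop[OF F] .
  have DTF: "Dop (T F) = tangent_pair (\<pi>\<^sub>0 A A \<times>\<^sub>a \<pi>\<^sub>0 A A) (Dop F) (Dop (Dop F))"
    using Dop_pow_T[OF F, of 1] by (simp add: funpow.simps(2) Pmap_Suc)
  have "ell X A \<rhd> Dop (T F)
      = tangent_pair (ell X A \<bullet> (\<pi>\<^sub>0 A A \<times>\<^sub>a \<pi>\<^sub>0 A A)) (Dop F) (ell X A \<rhd> Dop (Dop F))"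
    unfolding DTF by (rule pre_tangent_pair) (use A DF pre_Dseq_Dop[OF DF] in simp_all)
  also have "\<dots> = tangent_pair (\<pi>\<^sub>0 A A \<bullet> \<iota>\<^sub>0 A) (Dop F) (Dop F)"
  proof -
    have "ell X A \<bullet> (\<pi>\<^sub>0 A A \<times>\<^sub>a \<pi>\<^sub>0 A A) = \<pi>\<^sub>0 A A \<bullet> \<iota>\<^sub>0 A"
      by (rule prod_arr_eqI[of A A]) (use A in \<open>simp_all add: ell_eq\<close>)
    then show ?thesis
      by (simp only: ell)
  qed
  also have "\<dots> = tangent_pair (\<pi>\<^sub>0 A A) (seq_zero X A B) (Dop F)"
    using tangent_pair_comp[of "\<pi>\<^sub>0 A A" "\<iota>\<^sub>0 A" B "Dop F" "Dop F"] A DF inj0 by simp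
  finally have ell_DTF: "ell X A \<rhd> Dop (T F) = tangent_pair (\<pi>\<^sub>0 A A) (seq_zero X A B) (Dop F)" .
  have "ell X A \<rhd> T (T F)
      = tangent_pair (ell X A \<bullet> \<pi>\<^sub>0 (A \<otimes> A) (A \<otimes> A)) (T F) (ell X A \<rhd> Dop (T F))"
    unfolding T_eq_tangent_pair[OF TF]
    by (rule pre_tangent_pair) (use A TF pre_Dseq_Dop[OF TF] in simp_all)
  also have "\<dots> = tangent_pair (\<pi>\<^sub>0 A A) (\<iota>\<^sub>0 A \<rhd> T F) (ell X A \<rhd> Dop (T F))"
    using tangent_pair_comp[of "\<pi>\<^sub>0 A A" "\<iota>\<^sub>0 A" "B \<otimes> B" "T F"] A TF by (simp add: ell_eq)
  also have "\<dots> = tangent_pair (\<pi>\<^sub>0 A A) (F \<lhd> \<iota>\<^sub>0 B) (tangent_pair (\<pi>\<^sub>0 A A) (seq_zero X A B) (Dop F))"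
    by (simp only: inj0_pre_T[OF F inj0] ell_DTF)
  also have "\<dots> = T F \<lhd> ell X B"
    by (rule ext)
      (use A B pre_DseqD[OF F] in \<open>simp add: tangent_pair_def seq_post_def seq_zero_def
        Tseq_apply[OF F] ell_eq Dop_def\<close>)
  finally show ?thesis .
qed

lemma cmid_pre_TT:
  assumes F: "is_pre_Dseq X A B F" and cmid: "cmid X A \<rhd> Dop (Dop F) = Dop (Dop F)"
  shows "cmid X A \<rhd> T (T F) = T (T F) \<lhd> cmid X B"
proof -
  have A: "A \<in> Ob" and B: "B \<in> Ob"
    using pre_DseqD[OF F] by simp_all
  have TF: "is_pre_Dseq X (A \<otimes> A) (B \<otimes> B) (T F)" and DF: "is_pre_Dseq X (A \<otimes> A) B (Dop F)"
    using pre_Dseq_T[OF F] pre_Dseq_Dop[OF F] .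
  have DTF: "Dop (T F) = tangent_pair (\<pi>\<^sub>0 A A \<times>\<^sub>a \<pi>\<^sub>0 A A) (Dop F) (Dop (Dop F))"
    using Dop_pow_T[OF F, of 1] by (simp add: funpow.simps(2) Pmap_Suc)
  have cmid_proj: "cmid X A \<bullet> \<pi>\<^sub>0 (A \<otimes> A) (A \<otimes> A) = \<pi>\<^sub>0 A A \<times>\<^sub>a \<pi>\<^sub>0 A A"
    using A by (simp add: cmid_eq cross_def)
  have cmid_cross: "cmid X A \<bullet> (\<pi>\<^sub>0 A A \<times>\<^sub>a \<pi>\<^sub>0 A A) = \<pi>\<^sub>0 (A \<otimes> A) (A \<otimes> A)"
    by (rule prod_arr_eqI[of A A]) (use A in \<open>simp_all add: cmid_eq\<close>)
  have "cmid X A \<rhd> Dop (T F)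
      = tangent_pair (cmid X A \<bullet> (\<pi>\<^sub>0 A A \<times>\<^sub>a \<pi>\<^sub>0 A A)) (Dop F) (cmid X A \<rhd> Dop (Dop F))"
    unfolding DTF by (rule pre_tangent_pair) (use A DF pre_Dseq_Dop[OF DF] in simp_all)
  then have cmid_DTF: "cmid X A \<rhd> Dop (T F) = tangent_pair (\<pi>\<^sub>0 (A \<otimes> A) (A \<otimes> A)) (Dop F) (Dop (Dop F))"
    by (simp only: cmid_cross cmid)
  have "cmid X A \<rhd> T (T F)
      = tangent_pair (cmid X A \<bullet> \<pi>\<^sub>0 (A \<otimes> A) (A \<otimes> A)) (T F) (cmid X A \<rhd> Dop (T F))"
    unfolding T_eq_tangent_pair[OF TF]
    by (rule pre_tangent_pair) (use A TF pre_Dseq_Dop[OF TF] in simp_all)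
  also have "\<dots> = tangent_pair (\<pi>\<^sub>0 A A \<times>\<^sub>a \<pi>\<^sub>0 A A) (T F)
      (tangent_pair (\<pi>\<^sub>0 (A \<otimes> A) (A \<otimes> A)) (Dop F) (Dop (Dop F)))"
    by (simp only: cmid_proj cmid_DTF)
  also have "\<dots> = T (T F) \<lhd> cmid X B"
    by (rule ext)
      (use A B pre_DseqD[OF F] in \<open>simp add: tangent_pair_def seq_post_def
        cmid_eq Tseq_apply[OF TF] Tseq_apply[OF F] Dop_def Pmap_Suc'\<close>)
  finally show ?thesis .
qed

lemma tangent_pair_plus_seq_comp:
  assumes y: "arr y" and P: "is_pre_Dseq X (tgt y) B P"
    and a0: "is_pre_Dseq X (src y) B a\<^sub>0" and a1: "is_pre_Dseq X (src y) B a\<^sub>1"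
    and K: "is_pre_Dseq X (B \<otimes> B) C K"
    and sum_K: "(\<one> B \<times>\<^sub>a \<sigma> B) \<rhd> K = seq_plus X ((\<one> B \<times>\<^sub>a \<pi>\<^sub>0 B B) \<rhd> K) ((\<one> B \<times>\<^sub>a \<pi>\<^sub>1 B B) \<rhd> K)"
  shows "tangent_pair y P (seq_plus X a\<^sub>0 a\<^sub>1) \<star> K
    = seq_plus X (tangent_pair y P a\<^sub>0 \<star> K) (tangent_pair y P a\<^sub>1 \<star> K)"
proof -
  let ?s = "\<one> B \<times>\<^sub>a \<sigma> B" and ?p0 = "\<one> B \<times>\<^sub>a \<pi>\<^sub>0 B B" and ?p1 = "\<one> B \<times>\<^sub>a \<pi>\<^sub>1 B B"
  note P' = pre_DseqD[OF P] and a0' = pre_DseqD[OF a0] and a1' = pre_DseqD[OF a1]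
  have B: "B \<in> Ob"
    using P' by simp
  txt \<open>Through \<open>Q\<close> the sum \<open>a\<^sub>0 + a\<^sub>1\<close> becomes post-composition with \<open>1 \<times> (\<pi>\<^sub>0 + \<pi>\<^sub>1)\<close>,
    which is moved onto \<open>K\<close>.\<close>
  define Q where "Q = tangent_pair y P (\<lambda>k. \<langle>a\<^sub>0 k, a\<^sub>1 k\<rangle>)"
  have Q: "is_pre_Dseq X (src y) (B \<otimes> (B \<otimes> B)) Q"
    unfolding Q_def by (rule pre_Dseq_tangent_pair[OF y P pre_Dseq_pair[OF a0 a1]])
  have Q_sum: "tangent_pair y P (seq_plus X a\<^sub>0 a\<^sub>1) = Q \<lhd> ?s"
    and Q_proj0: "tangent_pair y P a\<^sub>0 = Q \<lhd> ?p0" and Q_proj1: "tangent_pair y P a\<^sub>1 = Q \<lhd> ?p1"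
    by (rule ext; use y P' a0' a1' in \<open>simp add: Q_def tangent_pair_def seq_post_def seq_plus_def\<close>)+
  have split_K: "is_pre_Dseq X (B \<otimes> (B \<otimes> B)) C (?p0 \<rhd> K)" "is_pre_Dseq X (B \<otimes> (B \<otimes> B)) C (?p1 \<rhd> K)"
    using pre_Dseq_pre[OF _ _ K, of ?p0] pre_Dseq_pre[OF _ _ K, of ?p1] B by simp_all
  have "tangent_pair y P (seq_plus X a\<^sub>0 a\<^sub>1) \<star> K = Q \<star> (?s \<rhd> K)"
    unfolding Q_sum by (rule post_seq_comp[OF Q _ _ _ K]) (use B in simp_all)
  also have "\<dots> = seq_plus X (Q \<star> (?p0 \<rhd> K)) (Q \<star> (?p1 \<rhd> K))"
    unfolding sum_K by (rule seq_comp_plus[OF Q split_K])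
  also have "\<dots> = seq_plus X (tangent_pair y P a\<^sub>0 \<star> K) (tangent_pair y P a\<^sub>1 \<star> K)"
    unfolding Q_proj0 Q_proj1
    using post_seq_comp[of "src y" "B \<otimes> (B \<otimes> B)" Q ?p0 "B \<otimes> B" C K]
      post_seq_comp[of "src y" "B \<otimes> (B \<otimes> B)" Q ?p1 "B \<otimes> B" C K] Q K B
    by simp
  finally show ?thesis .
qed

lemma sum_pre_T_seq_comp:
  assumes F: "is_pre_Dseq X A B F" and K: "is_pre_Dseq X (B \<otimes> B) C K"
    and sum_DF: "(\<one> A \<times>\<^sub>a \<sigma> A) \<rhd> Dop F =
      seq_plus X ((\<one> A \<times>\<^sub>a \<pi>\<^sub>0 A A) \<rhd> Dop F) ((\<one> A \<times>\<^sub>a \<pi>\<^sub>1 A A) \<rhd> Dop F)"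
    and sum_K: "(\<one> B \<times>\<^sub>a \<sigma> B) \<rhd> K = seq_plus X ((\<one> B \<times>\<^sub>a \<pi>\<^sub>0 B B) \<rhd> K) ((\<one> B \<times>\<^sub>a \<pi>\<^sub>1 B B) \<rhd> K)"
  shows "(\<one> A \<times>\<^sub>a \<sigma> A) \<rhd> (T F \<star> K) =
    seq_plus X ((\<one> A \<times>\<^sub>a \<pi>\<^sub>0 A A) \<rhd> (T F \<star> K)) ((\<one> A \<times>\<^sub>a \<pi>\<^sub>1 A A) \<rhd> (T F \<star> K))"
proof -
  let ?s = "\<one> A \<times>\<^sub>a \<sigma> A" and ?p0 = "\<one> A \<times>\<^sub>a \<pi>\<^sub>0 A A" and ?p1 = "\<one> A \<times>\<^sub>a \<pi>\<^sub>1 A A"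
  have A: "A \<in> Ob"
    using pre_DseqD[OF F] by simp
  have TF: "is_pre_Dseq X (A \<otimes> A) (B \<otimes> B) (T F)" and DF: "is_pre_Dseq X (A \<otimes> A) B (Dop F)"
    using pre_Dseq_T[OF F] pre_Dseq_Dop[OF F] .
  have split_DF: "is_pre_Dseq X (A \<otimes> (A \<otimes> A)) B (?p0 \<rhd> Dop F)" "is_pre_Dseq X (A \<otimes> (A \<otimes> A)) B (?p1 \<rhd> Dop F)"
    using pre_Dseq_pre[OF _ _ DF, of ?p0] pre_Dseq_pre[OF _ _ DF, of ?p1] A by simp_all
  have "?s \<rhd> (T F \<star> K) = (?s \<rhd> T F) \<star> K"
    by (rule pre_seq_comp[OF _ _ TF K]) (use A in simp_all)
  also have "\<dots> = tangent_pair (\<pi>\<^sub>0 A (A \<otimes> A)) F (seq_plus X (?p0 \<rhd> Dop F) (?p1 \<rhd> Dop F)) \<star> K"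
    using cross_pre_T[OF F, of "\<sigma> A"] sum_DF A by simp
  also have "\<dots> = seq_plus X (tangent_pair (\<pi>\<^sub>0 A (A \<otimes> A)) F (?p0 \<rhd> Dop F) \<star> K)
      (tangent_pair (\<pi>\<^sub>0 A (A \<otimes> A)) F (?p1 \<rhd> Dop F) \<star> K)"
    by (rule tangent_pair_plus_seq_comp[OF _ _ _ _ K sum_K]) (use A F split_DF in simp_all)
  also have "\<dots> = seq_plus X ((?p0 \<rhd> T F) \<star> K) ((?p1 \<rhd> T F) \<star> K)"
    using cross_pre_T[OF F, of "\<pi>\<^sub>0 A A"] cross_pre_T[OF F, of "\<pi>\<^sub>1 A A"] A by simp
  also have "\<dots> = seq_plus X (?p0 \<rhd> (T F \<star> K)) (?p1 \<rhd> (T F \<star> K))"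
    using pre_seq_comp[OF _ _ TF K, of ?p0] pre_seq_comp[OF _ _ TF K, of ?p1] A by simp
  finally show ?thesis .
qed

lemma Dseq_axioms_seq_comp:
  assumes F: "is_Dseq X A B F" and G: "is_Dseq X B C G"
  shows "Dseq_axioms A C (T F \<star> Dop G) (T (T F) \<star> Dop (Dop G))"
proof -
  have F': "is_pre_Dseq X A B F" and G': "is_pre_Dseq X B C G"
    using F G by (simp_all add: is_Dseq_pre_Dseq)
  have A: "A \<in> Ob" and B: "B \<in> Ob" and C: "C \<in> Ob"
    using pre_DseqD[OF F'] pre_DseqD[OF G'] by simp_all
  note axF = is_Dseq_axioms_0[OF F, unfolded Dseq_axioms_def]
    and axG = is_Dseq_axioms_0[OF G, unfolded Dseq_axioms_def]
  have TF: "is_pre_Dseq X (A \<otimes> A) (B \<otimes> B) (T F)" and TTF: "is_pre_Dseq X ((A \<otimes> A) \<otimes> (A \<otimes> A)) ((B \<otimes> B) \<otimes> (B \<otimes> B)) (T (T F))"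
    using pre_Dseq_T[OF F'] pre_Dseq_T[OF pre_Dseq_T[OF F']] .
  have DG: "is_pre_Dseq X (B \<otimes> B) C (Dop G)" and DDG: "is_pre_Dseq X ((B \<otimes> B) \<otimes> (B \<otimes> B)) C (Dop (Dop G))"
    using pre_Dseq_Dop[OF G'] pre_Dseq_Dop[OF pre_Dseq_Dop[OF G']] .
  have "\<iota>\<^sub>0 A \<rhd> (T F \<star> Dop G) = (F \<lhd> \<iota>\<^sub>0 B) \<star> Dop G"
    using pre_seq_comp[OF _ _ TF DG, of "\<iota>\<^sub>0 A"] inj0_pre_T[OF F'] axF A by simp
  also have "\<dots> = F \<star> seq_zero X B C"
    using post_seq_comp[of A B F "\<iota>\<^sub>0 B" "B \<otimes> B" C "Dop G"] F' DG axG B by simp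
  finally have inj0: "\<iota>\<^sub>0 A \<rhd> (T F \<star> Dop G) = seq_zero X A C"
    by (simp add: seq_comp_zero[OF F' C])
  have "ell X A \<rhd> (T (T F) \<star> Dop (Dop G)) = (T F \<lhd> ell X B) \<star> Dop (Dop G)"
    using pre_seq_comp[OF _ _ TTF DDG, of "ell X A"] ell_pre_TT[OF F'] axF A by simp
  also have "\<dots> = T F \<star> Dop G"
    using post_seq_comp[of "A \<otimes> A" "B \<otimes> B" "T F" "ell X B" _ C "Dop (Dop G)"] TF DDG axG B by simp
  finally have ell: "ell X A \<rhd> (T (T F) \<star> Dop (Dop G)) = T F \<star> Dop G" .
  have "cmid X A \<rhd> (T (T F) \<star> Dop (Dop G)) = (T (T F) \<lhd> cmid X B) \<star> Dop (Dop G)"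
    using pre_seq_comp[OF _ _ TTF DDG, of "cmid X A"] cmid_pre_TT[OF F'] axF A by simp
  also have "\<dots> = T (T F) \<star> Dop (Dop G)"
    using post_seq_comp[of _ _ "T (T F)" "cmid X B" _ C "Dop (Dop G)"] TTF DDG axG B by simp
  finally have cmid: "cmid X A \<rhd> (T (T F) \<star> Dop (Dop G)) = T (T F) \<star> Dop (Dop G)" .
  show ?thesis
    unfolding Dseq_axioms_def using inj0 sum_pre_T_seq_comp[OF F' DG] axF axG ell cmid by blast
qed

lemma T_pow_Suc': "(T ^^ Suc n) f = T ((T ^^ n) f)"
  by (simp only: funpow.simps(2) comp_def)

lemma Dop_pow_Suc: "(Dop ^^ Suc n) f = Dop ((Dop ^^ n) f)"
  by (simp add: funpow.simps(2))

lemma is_Dseq_T_pow: "is_Dseq X A B f \<Longrightarrow> is_Dseq X (Pn X n A) (Pn X n B) ((T ^^ n) f)"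
  by (induction n) (simp_all only: T_pow_Suc' Pn_Suc is_Dseq_T funpow_0 Pn_0)

lemma is_Dseq_seq_comp:
  assumes f: "is_Dseq X A B f" and g: "is_Dseq X B C g"
  shows "is_Dseq X A C (f \<star> g)"
  unfolding is_Dseq_iff
proof (intro conjI allI)
  show "is_pre_Dseq X A C (f \<star> g)"
    by (rule pre_Dseq_seq_comp[OF is_Dseq_pre_Dseq[OF f] is_Dseq_pre_Dseq[OF g]])
  fix n
  have "Dseq_axioms (Pn X n A) C (T ((T ^^ n) f) \<star> Dop ((Dop ^^ n) g))
      (T (T ((T ^^ n) f)) \<star> Dop (Dop ((Dop ^^ n) g)))"
    by (rule Dseq_axioms_seq_comp[OF is_Dseq_T_pow[OF f] is_Dseq_Dop_pow[OF g]])
  then show "Dseq_axioms (Pn X n A) C ((Dop ^^ Suc n) (f \<star> g)) ((Dop ^^ Suc (Suc n)) (f \<star> g))"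
    by (simp only: Dop_pow_seq_comp T_pow_Suc' Dop_pow_Suc)
qed

lemma pre_lift: "arr k \<Longrightarrow> tgt k = D \<Longrightarrow> arr u \<Longrightarrow> src u = D \<Longrightarrow> k \<rhd> lift D u = lift (src k) (k \<bullet> u)"
  by (rule ext) (use src_obj[of u] in \<open>simp add: seq_pre_def seq_post_def\<close>)

lemma lift_plus:
  "arr u \<Longrightarrow> arr v \<Longrightarrow> src u = D \<Longrightarrow> src v = D \<Longrightarrow> tgt u = tgt v \<Longrightarrow>
   seq_plus X (lift D u) (lift D v) = lift D (u \<oplus> v)"
  by (rule ext) (use src_obj[of u] in \<open>simp add: seq_plus_def seq_post_def\<close>)

lemma lift_zero: "C \<in> Ob \<Longrightarrow> B \<in> Ob \<Longrightarrow> lift C (\<zero> C B) = seq_zero X C B"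
  by (rule ext) (simp add: seq_zero_def seq_post_def)

lemma lift_pair:
  "arr u \<Longrightarrow> arr v \<Longrightarrow> src u = D \<Longrightarrow> src v = D \<Longrightarrow> (\<lambda>n. \<langle>lift D u n, lift D v n\<rangle>) = lift D \<langle>u, v\<rangle>"
  by (rule ext) (use src_obj[of u] in \<open>simp add: seq_post_def\<close>)

lemma Dop_pow_lift:
  assumes "arr h" "src h = A"
  shows "(Dop ^^ m) (lift A h) = lift (Pn X m A) (idseq X A m \<bullet> h)"
proof
  fix n
  have A: "A \<in> Ob"
    using assms by auto
  have "idseq X A (n + m) \<bullet> h = (idseq X (Pn X m A) n \<bullet> idseq X A m) \<bullet> h"
    using idseq_idseq[OF A, of m n] by simp
  also have "\<dots> = idseq X (Pn X m A) n \<bullet> (idseq X A m \<bullet> h)"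
    using A assms by simp
  finally show "(Dop ^^ m) (lift A h) n = lift (Pn X m A) (idseq X A m \<bullet> h) n"
    by (simp add: Dop_pow_apply seq_post_def)
qed

text \<open>Lifts of additive maps satisfy the D-sequence axioms because \<open>\<pi>\<^sub>1\<close> kills \<open>\<iota>\<^sub>0\<close> and
  \<open>\<pi>\<^sub>1 (\<pi>\<^sub>0 + \<pi>\<^sub>1) = \<pi>\<^sub>1 \<pi>\<^sub>0 + \<pi>\<^sub>1 \<pi>\<^sub>1\<close>.\<close>

lemma is_Dseq_lift:
  assumes h: "is_additive X h" "arr h" "src h = A"
  shows "is_Dseq X A (tgt h) (lift A h)"
  unfolding is_Dseq_iff
proof (intro conjI allI)
  have A: "A \<in> Ob"
    using h by auto
  show "is_pre_Dseq X A (tgt h) (lift A h)"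
    using pre_Dseq_lift[OF h(2)] h by simp
  fix n
  define C g where "C = Pn X n A" and "g = idseq X A n \<bullet> h"
  have C: "C \<in> Ob"
    using A by (simp add: C_def)
  have g: "is_additive X g" "arr g" "src g = C" "tgt g = tgt h" "tgt h \<in> Ob"
    using h A by (simp_all add: g_def C_def)
  have D1: "(Dop ^^ Suc n) (lift A h) = lift (C \<otimes> C) (\<pi>\<^sub>1 C C \<bullet> g)"
    using Dop_pow_lift[OF h(2,3), of "Suc n"] A h by (simp add: C_def g_def)
  have D2: "(Dop ^^ Suc (Suc n)) (lift A h)
      = lift ((C \<otimes> C) \<otimes> (C \<otimes> C)) (\<pi>\<^sub>1 (C \<otimes> C) (C \<otimes> C) \<bullet> (\<pi>\<^sub>1 C C \<bullet> g))"
    using Dop_pow_lift[OF h(2,3), of "Suc (Suc n)"] A h by (simp add: C_def g_def)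
  show "Dseq_axioms (Pn X n A) (tgt h) ((Dop ^^ Suc n) (lift A h)) ((Dop ^^ Suc (Suc n)) (lift A h))"
    unfolding D1 D2 Dseq_axioms_def C_def[symmetric]
    using C g
    by (simp add: pre_lift lift_zero lift_plus ell_eq cmid_eq del: idseq_prod_proj1 idseq_prod_proj1')
qed

lemma is_Dseq_idseq: "A \<in> Ob \<Longrightarrow> is_Dseq X A A (idseq X A)"
  using is_Dseq_lift[of "\<one> A" A] by (simp add: lift_id)

lemma is_Dseq_zero: "A \<in> Ob \<Longrightarrow> B \<in> Ob \<Longrightarrow> is_Dseq X A B (seq_zero X A B)"
  using is_Dseq_lift[of "\<zero> A B" A] by (simp add: lift_zero)

lemma is_Dseq_proj:
  "A \<in> Ob \<Longrightarrow> B \<in> Ob \<Longrightarrow> is_Dseq X (A \<otimes> B) A (lift (A \<otimes> B) (\<pi>\<^sub>0 A B))"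
  "A \<in> Ob \<Longrightarrow> B \<in> Ob \<Longrightarrow> is_Dseq X (A \<otimes> B) B (lift (A \<otimes> B) (\<pi>\<^sub>1 A B))"
  using is_Dseq_lift[of "\<pi>\<^sub>0 A B" "A \<otimes> B"] is_Dseq_lift[of "\<pi>\<^sub>1 A B" "A \<otimes> B"] by simp_all

lemma is_Dseq_bang: "A \<in> Ob \<Longrightarrow> is_Dseq X A (c_term X) (\<lambda>n. c_bang X (Pn X n A))"
proof -
  assume A: "A \<in> Ob"
  have "lift A (c_bang X A) = (\<lambda>n. c_bang X (Pn X n A))"
    by (rule ext, rule terminal_arr_eqI) (use A in \<open>simp_all add: seq_post_def\<close>)
  then show ?thesis
    using is_Dseq_lift[of "c_bang X A" A] A by simp
qed

lemma pre_seq_plus: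
  "arr h \<Longrightarrow> tgt h = D \<Longrightarrow> is_pre_Dseq X D B u \<Longrightarrow> is_pre_Dseq X D B v \<Longrightarrow>
   h \<rhd> seq_plus X u v = seq_plus X (h \<rhd> u) (h \<rhd> v)"
  by (rule ext) (simp add: seq_pre_def seq_plus_def pre_DseqD)

lemma pre_seq_pair:
  "arr h \<Longrightarrow> tgt h = D \<Longrightarrow> is_pre_Dseq X D A u \<Longrightarrow> is_pre_Dseq X D B v \<Longrightarrow>
   h \<rhd> (\<lambda>k. \<langle>u k, v k\<rangle>) = (\<lambda>k. \<langle>(h \<rhd> u) k, (h \<rhd> v) k\<rangle>)"
  by (rule ext) (simp add: seq_pre_def pre_DseqD)

lemma Dseq_axioms_plus:
  assumes C: "C \<in> Ob"
    and g: "is_pre_Dseq X (C \<otimes> C) B g" "is_pre_Dseq X ((C \<otimes> C) \<otimes> (C \<otimes> C)) B g'"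
    and h: "is_pre_Dseq X (C \<otimes> C) B h" "is_pre_Dseq X ((C \<otimes> C) \<otimes> (C \<otimes> C)) B h'"
    and "Dseq_axioms C B g g'" "Dseq_axioms C B h h'"
  shows "Dseq_axioms C B (seq_plus X g h) (seq_plus X g' h')"
proof -
  let ?s = "\<one> C \<times>\<^sub>a \<sigma> C" and ?p0 = "\<one> C \<times>\<^sub>a \<pi>\<^sub>0 C C" and ?p1 = "\<one> C \<times>\<^sub>a \<pi>\<^sub>1 C C"
  note ax = assms(6,7)[unfolded Dseq_axioms_def] and g' = pre_DseqD[OF g(1)] and h' = pre_DseqD[OF h(1)]
  have "?s \<rhd> seq_plus X g h = seq_plus X (seq_plus X (?p0 \<rhd> g) (?p1 \<rhd> g)) (seq_plus X (?p0 \<rhd> h) (?p1 \<rhd> h))"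
    using pre_seq_plus[OF _ _ g(1) h(1), of ?s] ax C by simp
  also have "\<dots> = seq_plus X (seq_plus X (?p0 \<rhd> g) (?p0 \<rhd> h)) (seq_plus X (?p1 \<rhd> g) (?p1 \<rhd> h))"
    by (rule ext) (use C g' h' in \<open>simp add: seq_plus_def seq_pre_def plus_interchange\<close>)
  also have "\<dots> = seq_plus X (?p0 \<rhd> seq_plus X g h) (?p1 \<rhd> seq_plus X g h)"
    using pre_seq_plus[OF _ _ g(1) h(1), of ?p0] pre_seq_plus[OF _ _ g(1) h(1), of ?p1] C by simp
  finally have sum: "?s \<rhd> seq_plus X g h = seq_plus X (?p0 \<rhd> seq_plus X g h) (?p1 \<rhd> seq_plus X g h)" .
  have "\<iota>\<^sub>0 C \<rhd> seq_plus X g h = seq_zero X C B"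
    using pre_seq_plus[OF _ _ g(1) h(1), of "\<iota>\<^sub>0 C"] ax C g'
    by (simp add: seq_plus_def seq_zero_def)
  moreover have "ell X C \<rhd> seq_plus X g' h' = seq_plus X g h"
    using pre_seq_plus[OF _ _ g(2) h(2), of "ell X C"] ax C by simp
  moreover have "cmid X C \<rhd> seq_plus X g' h' = seq_plus X g' h'"
    using pre_seq_plus[OF _ _ g(2) h(2), of "cmid X C"] ax C by simp
  ultimately show ?thesis
    unfolding Dseq_axioms_def using sum by blast
qed

lemma Dseq_axioms_pair:
  assumes C: "C \<in> Ob"
    and g: "is_pre_Dseq X (C \<otimes> C) A g" "is_pre_Dseq X ((C \<otimes> C) \<otimes> (C \<otimes> C)) A g'"
    and h: "is_pre_Dseq X (C \<otimes> C) B h" "is_pre_Dseq X ((C \<otimes> C) \<otimes> (C \<otimes> C)) B h'"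
    and "Dseq_axioms C A g g'" "Dseq_axioms C B h h'"
  shows "Dseq_axioms C (A \<otimes> B) (\<lambda>k. \<langle>g k, h k\<rangle>) (\<lambda>k. \<langle>g' k, h' k\<rangle>)"
proof -
  let ?s = "\<one> C \<times>\<^sub>a \<sigma> C" and ?p0 = "\<one> C \<times>\<^sub>a \<pi>\<^sub>0 C C" and ?p1 = "\<one> C \<times>\<^sub>a \<pi>\<^sub>1 C C"
  note ax = assms(6,7)[unfolded Dseq_axioms_def] and g' = pre_DseqD[OF g(1)] and h' = pre_DseqD[OF h(1)]
  have "?s \<rhd> (\<lambda>k. \<langle>g k, h k\<rangle>) = (\<lambda>k. \<langle>seq_plus X (?p0 \<rhd> g) (?p1 \<rhd> g) k, seq_plus X (?p0 \<rhd> h) (?p1 \<rhd> h) k\<rangle>)"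
    using pre_seq_pair[OF _ _ g(1) h(1), of ?s] ax C by simp
  also have "\<dots> = seq_plus X (\<lambda>k. \<langle>(?p0 \<rhd> g) k, (?p0 \<rhd> h) k\<rangle>) (\<lambda>k. \<langle>(?p1 \<rhd> g) k, (?p1 \<rhd> h) k\<rangle>)"
    by (rule ext) (use C g' h' in \<open>simp add: seq_plus_def seq_pre_def pair_plus\<close>)
  also have "\<dots> = seq_plus X (?p0 \<rhd> (\<lambda>k. \<langle>g k, h k\<rangle>)) (?p1 \<rhd> (\<lambda>k. \<langle>g k, h k\<rangle>))"
    using pre_seq_pair[OF _ _ g(1) h(1), of ?p0] pre_seq_pair[OF _ _ g(1) h(1), of ?p1] C by simp
  finally have sum: "?s \<rhd> (\<lambda>k. \<langle>g k, h k\<rangle>) = seq_plus X (?p0 \<rhd> (\<lambda>k. \<langle>g k, h k\<rangle>)) (?p1 \<rhd> (\<lambda>k. \<langle>g k, h k\<rangle>))" .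
  have "\<iota>\<^sub>0 C \<rhd> (\<lambda>k. \<langle>g k, h k\<rangle>) = seq_zero X C (A \<otimes> B)"
    using pre_seq_pair[OF _ _ g(1) h(1), of "\<iota>\<^sub>0 C"] ax C g' h'
    by (simp add: seq_zero_def pair_zero)
  moreover have "ell X C \<rhd> (\<lambda>k. \<langle>g' k, h' k\<rangle>) = (\<lambda>k. \<langle>g k, h k\<rangle>)"
    using pre_seq_pair[OF _ _ g(2) h(2), of "ell X C"] ax C by simp
  moreover have "cmid X C \<rhd> (\<lambda>k. \<langle>g' k, h' k\<rangle>) = (\<lambda>k. \<langle>g' k, h' k\<rangle>)"
    using pre_seq_pair[OF _ _ g(2) h(2), of "cmid X C"] ax C by simp
  ultimately show ?thesis
    unfolding Dseq_axioms_def using sum by blast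
qed

lemma is_Dseq_plus:
  assumes f: "is_Dseq X A B f" and g: "is_Dseq X A B g"
  shows "is_Dseq X A B (seq_plus X f g)"
  unfolding is_Dseq_iff
proof (intro conjI allI)
  have f': "is_pre_Dseq X A B f" and g': "is_pre_Dseq X A B g"
    using f g by (simp_all add: is_Dseq_pre_Dseq)
  show "is_pre_Dseq X A B (seq_plus X f g)"
    by (rule pre_Dseq_plus[OF f' g'])
  fix n
  have "(Dop ^^ m) (seq_plus X f g) = seq_plus X ((Dop ^^ m) f) ((Dop ^^ m) g)" for m
    by (rule ext) (simp add: Dop_pow_apply seq_plus_def)
  then show "Dseq_axioms (Pn X n A) B ((Dop ^^ Suc n) (seq_plus X f g)) ((Dop ^^ Suc (Suc n)) (seq_plus X f g))"
    using Dseq_axioms_plus[OF _ _ _ _ _ is_Dseq_axioms[OF f] is_Dseq_axioms[OF g]]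
      pre_Dseq_Dop_pow[OF f', of "Suc n"] pre_Dseq_Dop_pow[OF f', of "Suc (Suc n)"]
      pre_Dseq_Dop_pow[OF g', of "Suc n"] pre_Dseq_Dop_pow[OF g', of "Suc (Suc n)"] pre_DseqD[OF f']
    by simp
qed

lemma is_Dseq_pair:
  assumes f: "is_Dseq X D A f" and g: "is_Dseq X D B g"
  shows "is_Dseq X D (A \<otimes> B) (\<lambda>n. \<langle>f n, g n\<rangle>)"
  unfolding is_Dseq_iff
proof (intro conjI allI)
  have f': "is_pre_Dseq X D A f" and g': "is_pre_Dseq X D B g"
    using f g by (simp_all add: is_Dseq_pre_Dseq)
  show "is_pre_Dseq X D (A \<otimes> B) (\<lambda>n. \<langle>f n, g n\<rangle>)"
    by (rule pre_Dseq_pair[OF f' g'])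
  fix n
  have "(Dop ^^ m) (\<lambda>n. \<langle>f n, g n\<rangle>) = (\<lambda>k. \<langle>(Dop ^^ m) f k, (Dop ^^ m) g k\<rangle>)" for m
    by (rule ext) (simp add: Dop_pow_apply)
  then show "Dseq_axioms (Pn X n D) (A \<otimes> B) ((Dop ^^ Suc n) (\<lambda>n. \<langle>f n, g n\<rangle>))
      ((Dop ^^ Suc (Suc n)) (\<lambda>n. \<langle>f n, g n\<rangle>))"
    using Dseq_axioms_pair[OF _ _ _ _ _ is_Dseq_axioms[OF f] is_Dseq_axioms[OF g]]
      pre_Dseq_Dop_pow[OF f', of "Suc n"] pre_Dseq_Dop_pow[OF f', of "Suc (Suc n)"]
      pre_Dseq_Dop_pow[OF g', of "Suc n"] pre_Dseq_Dop_pow[OF g', of "Suc (Suc n)"] pre_DseqD[OF f']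
    by simp
qed

section \<open>The Cartesian differential category of D-sequences\<close>

abbreviation DX where "DX \<equiv> Dseq_cat X"

lemma Dseq_cat_simps[simp]:
  "c_obj DX = Ob" "c_arr DX = {f. \<exists>A B. is_Dseq X A B f}"
  "c_dom DX = (\<lambda>f. src (f 0))" "c_cod DX = (\<lambda>f. tgt (f 0))"
  "c_id DX = idseq X" "c_comp DX = seq_comp X" "c_plus DX = seq_plus X" "c_zero DX = seq_zero X"
  "c_prod DX = c_prod X" "c_p0 DX = (\<lambda>A B. lift (A \<otimes> B) (\<pi>\<^sub>0 A B))" "c_p1 DX = (\<lambda>A B. lift (A \<otimes> B) (\<pi>\<^sub>1 A B))"
  "c_pair DX = (\<lambda>f g n. \<langle>f n, g n\<rangle>)" "c_term DX = c_term X" "c_bang DX = (\<lambda>A n. c_bang X (Pn X n A))"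
  by (simp_all add: Dseq_cat_def)

lemma is_Dseq_typing:
  assumes "is_Dseq X A B f"
  shows "src (f 0) = A" "tgt (f 0) = B" "A \<in> Ob" "B \<in> Ob"
  using pre_DseqD(1-3)[OF is_Dseq_pre_Dseq[OF assms], of 0] pre_DseqD(4,5)[OF is_Dseq_pre_Dseq[OF assms]]
  by simp_all

lemma hom_Dseq_cat: "hom DX A B = {f. is_Dseq X A B f}"
  unfolding hom_def using is_Dseq_typing by auto

lemma category_Dseq_cat: "is_category DX"
  unfolding is_category_def hom_Dseq_cat mem_Collect_eq Dseq_cat_simps
proof (intro conjI allI impI ballI)
  fix f
  assume "f \<in> {f. \<exists>A B. is_Dseq X A B f}"
  then obtain A B where "is_Dseq X A B f"
    by blast
  then show "src (f 0) \<in> Ob" "tgt (f 0) \<in> Ob"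
    using is_Dseq_typing by simp_all
next
  fix A B f
  assume "is_Dseq X A B f"
  then show "idseq X A \<star> f = f" "f \<star> idseq X B = f"
    using idseq_seq_comp seq_comp_idseq is_Dseq_pre_Dseq by blast+
next
  fix A B D E f g h
  assume "is_Dseq X A B f" "is_Dseq X B D g" "is_Dseq X D E h"
  then show "(f \<star> g) \<star> h = f \<star> (g \<star> h)"
    using seq_comp_assoc is_Dseq_pre_Dseq by blast
qed (simp_all add: is_Dseq_idseq is_Dseq_seq_comp)

lemma left_additive_Dseq_cat: "is_left_additive DX"
  unfolding is_left_additive_def hom_Dseq_cat mem_Collect_eq Dseq_cat_simps
proof (intro conjI allI impI ballI category_Dseq_cat)
  fix A B f g h
  assume "is_Dseq X A B f" "is_Dseq X A B g" "is_Dseq X A B h"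
  note f = pre_DseqD[OF is_Dseq_pre_Dseq[OF this(1)]] and g = pre_DseqD[OF is_Dseq_pre_Dseq[OF this(2)]]
    and h = pre_DseqD[OF is_Dseq_pre_Dseq[OF this(3)]]
  show "seq_plus X (seq_plus X f g) h = seq_plus X f (seq_plus X g h)"
    by (rule ext) (use f g h in \<open>simp add: seq_plus_def plus_assoc\<close>)
next
  fix A B f g
  assume "is_Dseq X A B f" "is_Dseq X A B g"
  note f = pre_DseqD[OF is_Dseq_pre_Dseq[OF this(1)]] and g = pre_DseqD[OF is_Dseq_pre_Dseq[OF this(2)]]
  show "seq_plus X f g = seq_plus X g f"
    by (rule ext) (use f g in \<open>simp add: seq_plus_def plus_commute\<close>)
next
  fix A B f
  assume "is_Dseq X A B f"
  note f = pre_DseqD[OF is_Dseq_pre_Dseq[OF this]]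
  show "seq_plus X f (seq_zero X A B) = f"
    by (rule ext) (use f in \<open>simp add: seq_plus_def seq_zero_def\<close>)
next
  fix A B D f g h
  assume "is_Dseq X A B f" "is_Dseq X B D g" "is_Dseq X B D h"
  then show "f \<star> seq_plus X g h = seq_plus X (f \<star> g) (f \<star> h)"
    by (rule seq_comp_plus[OF is_Dseq_pre_Dseq is_Dseq_pre_Dseq is_Dseq_pre_Dseq])
next
  fix A B D f
  assume "is_Dseq X A B f" "D \<in> Ob"
  then show "f \<star> seq_zero X B D = seq_zero X A D"
    by (rule seq_comp_zero[OF is_Dseq_pre_Dseq])
qed (simp_all add: is_Dseq_zero is_Dseq_plus)

lemma additive_lift_Dseq_cat:
  assumes k: "is_additive X k" "arr k"
  shows "is_additive DX (lift (src k) k)"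
proof -
  let ?B = "src k"
  have dom: "src (lift ?B k 0) = ?B" "tgt (lift ?B k 0) = tgt k"
    using k by (simp_all add: seq_post_def)
  have B: "?B \<in> Ob"
    using k by simp
  show ?thesis
    unfolding is_additive_def hom_Dseq_cat mem_Collect_eq Dseq_cat_simps dom
  proof (intro conjI allI impI ballI)
    fix A f g
    assume "is_Dseq X A ?B f" "is_Dseq X A ?B g"
    then have f: "is_pre_Dseq X A ?B f" and g: "is_pre_Dseq X A ?B g"
      by (simp_all add: is_Dseq_pre_Dseq)
    show "seq_plus X f g \<star> lift ?B k = seq_plus X (f \<star> lift ?B k) (g \<star> lift ?B k)"
      using seq_comp_lift[OF pre_Dseq_plus[OF f g] k(2)] seq_comp_lift[OF f k(2)] seq_comp_lift[OF g k(2)] k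
      by (simp add: seq_post_def seq_plus_def pre_DseqD[OF f] pre_DseqD[OF g] fun_eq_iff)
  next
    fix A
    assume A: "A \<in> Ob"
    show "seq_zero X A ?B \<star> lift ?B k = seq_zero X A (tgt k)"
      using seq_comp_lift[OF pre_Dseq_zero[OF A B] k(2)] A k
      by (simp add: seq_post_def seq_zero_def fun_eq_iff)
  qed
qed

lemma terminal_seq_unique: "is_pre_Dseq X A (c_term X) h \<Longrightarrow> h = (\<lambda>n. c_bang X (Pn X n A))"
  by (rule ext) (use bang_unique pre_DseqD in metis)

lemma pair_seq_comp_proj:
  assumes f: "is_pre_Dseq X D A f" and g: "is_pre_Dseq X D B g"
  shows "(\<lambda>n. \<langle>f n, g n\<rangle>) \<star> lift (A \<otimes> B) (\<pi>\<^sub>0 A B) = f"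
    and "(\<lambda>n. \<langle>f n, g n\<rangle>) \<star> lift (A \<otimes> B) (\<pi>\<^sub>1 A B) = g"
  using seq_comp_lift[OF pre_Dseq_pair[OF f g], of "\<pi>\<^sub>0 A B"]
    seq_comp_lift[OF pre_Dseq_pair[OF f g], of "\<pi>\<^sub>1 A B"] pre_DseqD[OF f] pre_DseqD[OF g]
  by (simp_all add: seq_post_def fun_eq_iff)

lemma seq_comp_proj_pair:
  assumes "A \<in> Ob" "B \<in> Ob" and h: "is_pre_Dseq X D (A \<otimes> B) h"
  shows "(\<lambda>n. \<langle>(h \<star> lift (A \<otimes> B) (\<pi>\<^sub>0 A B)) n, (h \<star> lift (A \<otimes> B) (\<pi>\<^sub>1 A B)) n\<rangle>) = h"
  using seq_comp_lift[OF h, of "\<pi>\<^sub>0 A B"] seq_comp_lift[OF h, of "\<pi>\<^sub>1 A B"] assms pre_DseqD[OF h]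
  by (simp add: seq_post_def fun_eq_iff pair_eta)

lemma cartesian_left_additive_Dseq_cat: "is_cartesian_left_additive DX"
  unfolding is_cartesian_left_additive_def
proof (intro conjI left_additive_Dseq_cat)
  show "\<forall>A\<in>c_obj DX. c_bang DX A \<in> hom DX A (c_term DX) \<and> (\<forall>h\<in>hom DX A (c_term DX). h = c_bang DX A)"
    unfolding hom_Dseq_cat mem_Collect_eq Dseq_cat_simps
    using is_Dseq_bang terminal_seq_unique is_Dseq_pre_Dseq by blast
  show "\<forall>A\<in>c_obj DX. \<forall>B\<in>c_obj DX. c_prod DX A B \<in> c_obj DX \<and>
      c_p0 DX A B \<in> hom DX (c_prod DX A B) A \<and> c_p1 DX A B \<in> hom DX (c_prod DX A B) B \<and>
      is_additive DX (c_p0 DX A B) \<and> is_additive DX (c_p1 DX A B)"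
  proof (intro ballI conjI)
    fix A B
    assume "A \<in> c_obj DX" "B \<in> c_obj DX"
    then have A: "A \<in> Ob" and B: "B \<in> Ob"
      by simp_all
    show "c_prod DX A B \<in> c_obj DX"
      using A B by simp
    show "c_p0 DX A B \<in> hom DX (c_prod DX A B) A" "c_p1 DX A B \<in> hom DX (c_prod DX A B) B"
      using is_Dseq_proj[OF A B] by (simp_all add: hom_Dseq_cat)
    show "is_additive DX (c_p0 DX A B)" "is_additive DX (c_p1 DX A B)"
      using additive_lift_Dseq_cat[of "\<pi>\<^sub>0 A B"] additive_lift_Dseq_cat[of "\<pi>\<^sub>1 A B"] A B by simp_all
  qed
  show "\<forall>A B D f g. A \<in> c_obj DX \<longrightarrow> B \<in> c_obj DX \<longrightarrow> f \<in> hom DX D A \<longrightarrow> g \<in> hom DX D B \<longrightarrow>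
      c_pair DX f g \<in> hom DX D (c_prod DX A B) \<and>
      c_comp DX (c_pair DX f g) (c_p0 DX A B) = f \<and> c_comp DX (c_pair DX f g) (c_p1 DX A B) = g"
    unfolding hom_Dseq_cat mem_Collect_eq Dseq_cat_simps
    using is_Dseq_pair pair_seq_comp_proj is_Dseq_pre_Dseq by blast
  show "\<forall>A B D h. A \<in> c_obj DX \<longrightarrow> B \<in> c_obj DX \<longrightarrow> h \<in> hom DX D (c_prod DX A B) \<longrightarrow>
      c_pair DX (c_comp DX h (c_p0 DX A B)) (c_comp DX h (c_p1 DX A B)) = h"
    unfolding hom_Dseq_cat mem_Collect_eq Dseq_cat_simps
    using seq_comp_proj_pair is_Dseq_pre_Dseq by blast
qed simp

lemma seq_comp_lift_lift:
  "arr h \<Longrightarrow> src h = D \<Longrightarrow> arr u \<Longrightarrow> tgt h = E \<Longrightarrow> src u = E \<Longrightarrow> lift D h \<star> lift E u = lift D (h \<bullet> u)"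
  using lift_seq_comp[of h D "lift E u"] pre_lift[of h E u] by simp

lemma cross_Dseq_cat_lift:
  assumes u: "arr u" "src u = A" and v: "arr v" "src v = B"
  shows "cross DX (lift A u) (lift B v) = lift (A \<otimes> B) (u \<times>\<^sub>a v)"
proof -
  have A: "A \<in> Ob" "B \<in> Ob"
    using u v by auto
  have "cross DX (lift A u) (lift B v)
      = (\<lambda>n. \<langle>(lift (A \<otimes> B) (\<pi>\<^sub>0 A B) \<star> lift A u) n, (lift (A \<otimes> B) (\<pi>\<^sub>1 A B) \<star> lift B v) n\<rangle>)"
    using u v A by (simp add: cross_def seq_post_def)
  also have "\<dots> = (\<lambda>n. \<langle>lift (A \<otimes> B) (\<pi>\<^sub>0 A B \<bullet> u) n, lift (A \<otimes> B) (\<pi>\<^sub>1 A B \<bullet> v) n\<rangle>)"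
    using A u v by (simp add: seq_comp_lift_lift)
  also have "\<dots> = lift (A \<otimes> B) (u \<times>\<^sub>a v)"
    using lift_pair[of "\<pi>\<^sub>0 A B \<bullet> u" "\<pi>\<^sub>1 A B \<bullet> v" "A \<otimes> B"] A u v by (simp add: cross_def)
  finally show ?thesis .
qed

lemma cross_idseq_lift:
  "A \<in> Ob \<Longrightarrow> arr p \<Longrightarrow> src p = B \<Longrightarrow> cross DX (idseq X A) (lift B p) = lift (A \<otimes> B) (\<one> A \<times>\<^sub>a p)"
  using cross_Dseq_cat_lift[of "\<one> A" A p B] by (simp add: lift_id)

lemma inj0_Dseq_cat: "A \<in> Ob \<Longrightarrow> (\<lambda>n. \<langle>idseq X A n, seq_zero X A A n\<rangle>) = lift A (\<iota>\<^sub>0 A)"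
  using lift_pair[of "\<one> A" "\<zero> A A" A] by (simp add: lift_id lift_zero)

lemma ell_Dseq_cat:
  assumes A: "A \<in> Ob"
  shows "ell DX A = lift (A \<otimes> A) (ell X A)"
proof -
  have "(\<lambda>n. \<langle>seq_zero X A A n, idseq X A n\<rangle>) = lift A (\<iota>\<^sub>1 A)"
    using lift_pair[of "\<zero> A A" "\<one> A" A] A by (simp add: lift_id lift_zero)
  then show ?thesis
    using inj0_Dseq_cat[OF A] cross_Dseq_cat_lift[of "\<iota>\<^sub>0 A" A "\<iota>\<^sub>1 A" A] A
    by (simp add: ell_def ell_eq)
qed

lemma cmid_Dseq_cat:
  assumes A: "A \<in> Ob"
  shows "cmid DX A = lift ((A \<otimes> A) \<otimes> (A \<otimes> A)) (cmid X A)"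
proof -
  let ?P = "(A \<otimes> A) \<otimes> (A \<otimes> A)" and ?q0 = "\<pi>\<^sub>0 (A \<otimes> A) (A \<otimes> A)" and ?q1 = "\<pi>\<^sub>1 (A \<otimes> A) (A \<otimes> A)"
  have "cmid DX A = (\<lambda>n. \<langle>\<langle>lift ?P (?q0 \<bullet> \<pi>\<^sub>0 A A) n, lift ?P (?q1 \<bullet> \<pi>\<^sub>0 A A) n\<rangle>,
                            \<langle>lift ?P (?q0 \<bullet> \<pi>\<^sub>1 A A) n, lift ?P (?q1 \<bullet> \<pi>\<^sub>1 A A) n\<rangle>\<rangle>)"
    using A by (simp add: cmid_def Let_def seq_comp_lift_lift)
  also have "\<dots> = lift ?P (cmid X A)"
    using A lift_pair[of "?q0 \<bullet> \<pi>\<^sub>0 A A" "?q1 \<bullet> \<pi>\<^sub>0 A A" ?P] lift_pair[of "?q0 \<bullet> \<pi>\<^sub>1 A A" "?q1 \<bullet> \<pi>\<^sub>1 A A" ?P]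
      lift_pair[of "\<langle>?q0 \<bullet> \<pi>\<^sub>0 A A, ?q1 \<bullet> \<pi>\<^sub>0 A A\<rangle>" "\<langle>?q0 \<bullet> \<pi>\<^sub>1 A A, ?q1 \<bullet> \<pi>\<^sub>1 A A\<rangle>" ?P]
    by (simp add: cmid_eq fun_eq_iff)
  finally show ?thesis .
qed

lemma tangent_Dseq_cat_eq_T:
  assumes f: "is_pre_Dseq X A B f"
  shows "c_pair DX (lift (A \<otimes> A) (\<pi>\<^sub>0 A A) \<star> f) (Dop f) = T f"
proof -
  have A: "A \<in> Ob"
    using pre_DseqD[OF f] by simp
  have "lift (A \<otimes> A) (\<pi>\<^sub>0 A A) \<star> f = \<pi>\<^sub>0 A A \<rhd> f"
    using A by (simp add: lift_seq_comp)
  then show ?thesis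
    by (simp add: fun_eq_iff seq_pre_def Dop_def Tseq_apply[OF f])
qed

lemma Dop_additive_Dseq_cat:
  assumes "f \<in> hom DX A B"
  shows "c_comp DX (cross DX (c_id DX A) (c_plus DX (c_p0 DX A A) (c_p1 DX A A))) (Dop f) =
      c_plus DX (c_comp DX (cross DX (c_id DX A) (c_p0 DX A A)) (Dop f))
                (c_comp DX (cross DX (c_id DX A) (c_p1 DX A A)) (Dop f))"
proof -
  have f: "is_Dseq X A B f"
    using assms by (simp add: hom_Dseq_cat)
  have A: "A \<in> Ob"
    using is_Dseq_typing[OF f] by simp
  have "seq_plus X (lift (A \<otimes> A) (\<pi>\<^sub>0 A A)) (lift (A \<otimes> A) (\<pi>\<^sub>1 A A)) = lift (A \<otimes> A) (\<sigma> A)"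
    using A by (simp add: lift_plus)
  then show ?thesis
    using is_Dseq_axioms_0[OF f] A by (simp add: Dseq_axioms_def cross_idseq_lift lift_seq_comp)
qed

lemma chain_rule_Dseq_cat:
  assumes "f \<in> hom DX A B"
  shows "Dop (c_comp DX f g) = c_comp DX (c_pair DX (c_comp DX (c_p0 DX A A) f) (Dop f)) (Dop g)"
proof -
  have f: "is_pre_Dseq X A B f"
    using assms by (simp add: hom_Dseq_cat is_Dseq_pre_Dseq)
  then show ?thesis
    using tangent_Dseq_cat_eq_T[OF f] by (simp add: Dop_seq_comp)
qed

lemma cartesian_differential_Dseq_cat: "is_cartesian_differential DX Dop"
  unfolding is_cartesian_differential_def
proof (intro conjI cartesian_left_additive_Dseq_cat)
  show "\<forall>A B f. f \<in> hom DX A B \<longrightarrow> Dop f \<in> hom DX (c_prod DX A A) B"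
    by (simp add: hom_Dseq_cat is_Dseq_Dop)
  show "\<forall>A B f g. f \<in> hom DX A B \<longrightarrow> g \<in> hom DX A B \<longrightarrow> Dop (c_plus DX f g) = c_plus DX (Dop f) (Dop g)"
    by (simp add: Dop_def seq_plus_def)
  show "\<forall>A\<in>c_obj DX. \<forall>B\<in>c_obj DX. Dop (c_zero DX A B) = c_zero DX (c_prod DX A A) B"
    by (simp add: Dop_def seq_zero_def fun_eq_iff)
  show "\<forall>A B f. f \<in> hom DX A B \<longrightarrow>
      c_comp DX (cross DX (c_id DX A) (c_plus DX (c_p0 DX A A) (c_p1 DX A A))) (Dop f) =
      c_plus DX (c_comp DX (cross DX (c_id DX A) (c_p0 DX A A)) (Dop f))
                (c_comp DX (cross DX (c_id DX A) (c_p1 DX A A)) (Dop f))"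
    using Dop_additive_Dseq_cat by blast
  show "\<forall>A B f. f \<in> hom DX A B \<longrightarrow> c_comp DX (c_pair DX (c_id DX A) (c_zero DX A A)) (Dop f) = c_zero DX A B"
    using is_Dseq_axioms_0 is_Dseq_typing
    by (simp add: hom_Dseq_cat Dseq_axioms_def inj0_Dseq_cat lift_seq_comp)
  show "\<forall>A\<in>c_obj DX. Dop (c_id DX A) = c_p1 DX A A"
    by (simp add: Dop_def seq_post_def fun_eq_iff)
  show "\<forall>A\<in>c_obj DX. \<forall>B\<in>c_obj DX.
      Dop (c_p0 DX A B) = c_comp DX (c_p1 DX (c_prod DX A B) (c_prod DX A B)) (c_p0 DX A B) \<and>
      Dop (c_p1 DX A B) = c_comp DX (c_p1 DX (c_prod DX A B) (c_prod DX A B)) (c_p1 DX A B)"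
    by (simp add: seq_comp_lift_lift) (simp add: Dop_def seq_post_def fun_eq_iff)
  show "\<forall>A B E f g. f \<in> hom DX A B \<longrightarrow> g \<in> hom DX A E \<longrightarrow> Dop (c_pair DX f g) = c_pair DX (Dop f) (Dop g)"
    by (simp add: Dop_def)
  show "\<forall>A B E f g. f \<in> hom DX A B \<longrightarrow> g \<in> hom DX B E \<longrightarrow>
      Dop (c_comp DX f g) = c_comp DX (c_pair DX (c_comp DX (c_p0 DX A A) f) (Dop f)) (Dop g)"
    using chain_rule_Dseq_cat by blast
  show "\<forall>A B f. f \<in> hom DX A B \<longrightarrow> c_comp DX (ell DX A) (Dop (Dop f)) = Dop f"
    using is_Dseq_axioms_0 is_Dseq_typing
    by (simp add: hom_Dseq_cat Dseq_axioms_def ell_Dseq_cat lift_seq_comp)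
  show "\<forall>A B f. f \<in> hom DX A B \<longrightarrow> c_comp DX (cmid DX A) (Dop (Dop f)) = Dop (Dop f)"
    using is_Dseq_axioms_0 is_Dseq_typing
    by (simp add: hom_Dseq_cat Dseq_axioms_def cmid_Dseq_cat lift_seq_comp)
qed

end

theorem corollary4p22:
  fixes X :: "('o, 'm) cat_data"
  assumes "is_cartesian_left_additive X"
  shows "is_cartesian_differential (Dseq_cat X) Dop
    \<and> (\<forall>f \<in> c_arr (Dseq_cat X). Dop f = delta f 1)
    \<and> (\<forall>A B f. f \<in> hom (Dseq_cat X) A B \<longrightarrow>
         c_pair (Dseq_cat X) (c_comp (Dseq_cat X) (c_p0 (Dseq_cat X) A A) f) (Dop f) = Tseq X f)"
proof -
  interpret cartesian_left_additive_cat X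
    by (rule cartesian_left_additive_cat.intro) (fact assms)
  have "Dop f = delta f 1" for f :: "nat \<Rightarrow> 'm"
    by (simp add: delta_def funpow.simps(2))
  moreover have "c_pair DX (c_comp DX (c_p0 DX A A) f) (Dop f) = T f" if "f \<in> hom DX A B" for A B f
    using tangent_Dseq_cat_eq_T[OF is_Dseq_pre_Dseq] that by (simp add: hom_Dseq_cat)
  ultimately show ?thesis
    using cartesian_differential_Dseq_cat by blast
qed

end
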